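(* With the multiplication $m$, comultiplication $\mu$, unit and counit $\varepsilon$ described in the context, $dWHA$ is a connected graded bialgebra over $\mathbf{Z}$: $m$ is associative with unit the empty substitution, $\mu$ is coassociative with counit $\varepsilon$, all structure maps respect the grading, and $\mu$ is an algebra morphism, i.e. $\mu\circ m=(m\otimes m)\circ(\mathrm{id}\otimes \mathrm{tw}\otimes \mathrm{id})\circ(\mu\otimes\mu)$, where $\mathrm{tw}(a\otimes b)=b\otimes a$. Consequently $dWHA$ is a Hopf algebra.
   Context: Words are finite sequences of letters; $*$ denotes concatenation; the support $\mathrm{supp}(\alpha)$ of a word is the set of letters occurring in it. The shuffle product $\alpha\times_{sh}\beta$ of words $\alpha=[c_1,\dots,c_p]$, $\beta=[d_1,\dots,d_q]$ is the sum, with multiplicities, over all ways of choosing $p$ of the $p+q$ positions, of the word obtained by placing the $c$'s in their original order in the chosen positions and the $d$'s in their original order in the remaining ones. A subword of $[a_1,\dots,a_m]$ is a word $[a_{i_1},\dots,a_{i_r}]$ with $i_1<\dots<i_r$. Definition of $dWHA$: Let $\mathcal X$ be a countably infinite alphabet. A substitution is a pair $p=\binom{\rho}{\sigma}$ of words over $\mathcal X$ with $\mathrm{supp}(\rho)=\mathrm{supp}(\sigma)$, considered up to simultaneously renaming the letters of both words by a bijection of $\mathcal X$. $dWHA$ is the free abelian group with basis all substitutions (including the empty substitution $\binom{[\,]}{[\,]}$), graded by $\deg(p)=\#\mathrm{supp}(\rho)$. Multiplication: for substitutions $p=\binom{\rho}{\sigma}$, $p'=\binom{\rho'}{\sigma'}$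 written with $\mathrm{supp}(\rho)\cap\mathrm{supp}(\rho')=\emptyset$, $m(p\otimes p')=\binom{\rho*\rho'}{\sigma\times_{sh}\sigma'}$, meaning the sum of $\binom{\rho*\rho'}{\gamma}$ over the terms $\gamma$ (with multiplicity) of $\sigma\times_{sh}\sigma'$. The unit is the empty substitution. A good cut of a word $\sigma$ is a factorization $\sigma=\sigma_1*\sigma_2$ with $\mathrm{supp}(\sigma_1)\cap\mathrm{supp}(\sigma_2)=\emptyset$ (the two trivial cuts included). Comultiplication: $\mu(p)=\sum \binom{p^{-1}(\sigma_1)}{\sigma_1}\otimes\binom{p^{-1}(\sigma_2)}{\sigma_2}$, summed over all good cuts $\sigma=\sigma_1*\sigma_2$, where $p^{-1}(\sigma_i)$ is the subword of $\rho$ consisting of all occurrences in $\rho$ of letters of $\mathrm{supp}(\sigma_i)$. Counit: $\varepsilon$ is $1$ on the empty substitution and $0$ on all other substitutions. *)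

theory Defs
  imports "HOL-Library.Poly_Mapping"
begin

text \<open>Substitutions are
taken up to simultaneous bijective renaming of letters; we represent each class by its
canonical representative, obtained by renaming the letters in order of their first
occurrence in rho to 0, 1, 2, ...\<close>

type_synonym word = "nat list"
type_synonym subst = "word \<times> word"

definition valid :: "subst \<Rightarrow> bool" where
  "valid p \<longleftrightarrow> set (fst p) = set (snd p)"

definition rn :: "word \<Rightarrow> nat \<Rightarrow> nat" where
  "rn \<rho> a = card (set (takeWhile (\<lambda>b. b \<noteq> a) \<rho>))"

definition std :: "subst \<Rightarrow> subst" where
  "std p = (map (rn (fst p)) (fst p), map (rn (fst p)) (snd p))"

definition Canon :: "subst set" where
  "Canon = {p. valid p \<and> std p = p}"

definition empty_subst :: subst where
  "empty_subst = ([], [])"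

definition deg :: "subst \<Rightarrow> nat" where
  "deg p = card (set (fst p))"

text \<open>dWHA = free abelian group on Canon; its tensor square is free on Canon x Canon.\<close>
definition dWHA :: "(subst \<Rightarrow>\<^sub>0 int) set" where
  "dWHA = {x. Poly_Mapping.keys x \<subseteq> Canon}"

definition dWHA2 :: "(subst \<times> subst \<Rightarrow>\<^sub>0 int) set" where
  "dWHA2 = {x. Poly_Mapping.keys x \<subseteq> Canon \<times> Canon}"

fun shuffle :: "'a list \<Rightarrow> 'a list \<Rightarrow> 'a list list" where
  "shuffle [] ys = [ys]"
| "shuffle xs [] = [xs]"
| "shuffle (x # xs) (y # ys) =
     map ((#) x) (shuffle xs (y # ys)) @ map ((#) y) (shuffle (x # xs) ys)"

text \<open>Product of two basis elements: rename to make the supports disjoint, then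
(rho * rho', sigma shuffle sigma').\<close>
definition mult_basis :: "subst \<Rightarrow> subst \<Rightarrow> subst \<Rightarrow>\<^sub>0 int" where
  "mult_basis p q =
     (let (\<rho>, \<sigma>) = std p; (\<rho>', \<sigma>') = std q; k = deg (\<rho>, \<sigma>);
          \<rho>'' = map ((+) k) \<rho>'; \<sigma>'' = map ((+) k) \<sigma>'
      in sum_list (map (\<lambda>\<gamma>. frag_of (std (\<rho> @ \<rho>'', \<gamma>))) (shuffle \<sigma> \<sigma>'')))"

definition comult_basis :: "subst \<Rightarrow> (subst \<times> subst) \<Rightarrow>\<^sub>0 int" where
  "comult_basis p =
     sum_list (map (\<lambda>i. let s1 = take i (snd p); s2 = drop i (snd p) in
        if set s1 \<inter> set s2 = {}
        then frag_of (std (filter (\<lambda>a. a \<in> set s1) (fst p), s1),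
                      std (filter (\<lambda>a. a \<in> set s2) (fst p), s2))
        else 0) [0..<Suc (length (snd p))])"

definition tensor :: "('a \<Rightarrow>\<^sub>0 int) \<Rightarrow> ('b \<Rightarrow>\<^sub>0 int) \<Rightarrow> ('a \<times> 'b) \<Rightarrow>\<^sub>0 int" where
  "tensor x y = frag_extend (\<lambda>a. frag_extend (\<lambda>b. frag_of (a, b)) y) x"

definition tmap :: "(('a \<Rightarrow>\<^sub>0 int) \<Rightarrow> ('c \<Rightarrow>\<^sub>0 int)) \<Rightarrow> (('b \<Rightarrow>\<^sub>0 int) \<Rightarrow> ('d \<Rightarrow>\<^sub>0 int))
     \<Rightarrow> (('a \<times> 'b) \<Rightarrow>\<^sub>0 int) \<Rightarrow> ('c \<times> 'd) \<Rightarrow>\<^sub>0 int" where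
  "tmap f g z = frag_extend (\<lambda>(a, b). tensor (f (frag_of a)) (g (frag_of b))) z"

definition mult :: "((subst \<times> subst) \<Rightarrow>\<^sub>0 int) \<Rightarrow> subst \<Rightarrow>\<^sub>0 int" where
  "mult z = frag_extend (\<lambda>(p, q). mult_basis p q) z"

definition comult :: "(subst \<Rightarrow>\<^sub>0 int) \<Rightarrow> (subst \<times> subst) \<Rightarrow>\<^sub>0 int" where
  "comult x = frag_extend comult_basis x"

definition unit :: "int \<Rightarrow> subst \<Rightarrow>\<^sub>0 int" where
  "unit c = frag_cmul c (frag_of empty_subst)"

definition counit :: "(subst \<Rightarrow>\<^sub>0 int) \<Rightarrow> int" where
  "counit x = Poly_Mapping.lookup x empty_subst"

text \<open>(eps (x) id) and (id (x) eps), composed with the identifications Z (x) A = A = A (x) Z.\<close>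
definition lcounit :: "((subst \<times> subst) \<Rightarrow>\<^sub>0 int) \<Rightarrow> subst \<Rightarrow>\<^sub>0 int" where
  "lcounit z = frag_extend (\<lambda>(a, b). frag_cmul (counit (frag_of a)) (frag_of b)) z"

definition rcounit :: "((subst \<times> subst) \<Rightarrow>\<^sub>0 int) \<Rightarrow> subst \<Rightarrow>\<^sub>0 int" where
  "rcounit z = frag_extend (\<lambda>(a, b). frag_cmul (counit (frag_of b)) (frag_of a)) z"

definition tassoc :: "((('a \<times> 'b) \<times> 'c) \<Rightarrow>\<^sub>0 int) \<Rightarrow> ('a \<times> ('b \<times> 'c)) \<Rightarrow>\<^sub>0 int" where
  "tassoc z = frag_extend (\<lambda>((a, b), c). frag_of (a, (b, c))) z"

text \<open>id (x) tw (x) id.\<close>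
definition midtw :: "((('a \<times> 'b) \<times> ('c \<times> 'd)) \<Rightarrow>\<^sub>0 int) \<Rightarrow> (('a \<times> 'c) \<times> ('b \<times> 'd)) \<Rightarrow>\<^sub>0 int" where
  "midtw z = frag_extend (\<lambda>((a, b), (c, d)). frag_of ((a, c), (b, d))) z"

end

theory Submission
  imports "HOL-Library.Multiset" Defs
begin

text \<open>Standardisation commutes with injective renaming of letters, so a product or coproduct of
  basis elements may be computed on any representatives; for the product we take representatives
  with disjoint letters, and then it is the plain shuffle of the lower words. Associativity of the
  product is associativity of the shuffle, coassociativity is the fact that iterated cuts of a word
  do not depend on the bracketing, and compatibility of product and coproduct is the fact that the
  cuts of the shuffles of two words are exactly the pairs of shuffles of their cuts, a cut being
  good iff both induced cuts are. Finally the empty substitution is the only basis element of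
  degree 0, so left and right antipodes can be defined by recursion on the degree; they agree by
  associativity of convolution.\<close>

lemma frag_induct [case_names zero one diff]:
  assumes "P 0" and "\<And>x. P (frag_of x)" and "\<And>a b. P a \<Longrightarrow> P b \<Longrightarrow> P (a - b)"
  shows "P c"
  using subset_UNIV[of "Poly_Mapping.keys c"] by (induction c rule: frag_induction) (use assms in auto)

lemma frag_extend_frag_of [simp]: "frag_extend frag_of x = x"
  using frag_expansion by metis

lemma frag_extend_cong [fundef_cong]:
  "x = y \<Longrightarrow> (\<And>a. a \<in> Poly_Mapping.keys y \<Longrightarrow> f a = g a) \<Longrightarrow> frag_extend f x = frag_extend g y"
  using frag_extend_eq by blast

lemma frag_extend_sum_list: "frag_extend f (sum_list xs) = sum_list (map (frag_extend f) xs)"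
  by (induction xs) (simp_all add: frag_extend_add)

lemma frag_extend_frag_extend:
  "frag_extend g (frag_extend f x) = frag_extend (\<lambda>a. frag_extend g (f a)) x"
  by (induction x rule: frag_induct) (auto simp: frag_extend_diff)

lemma frag_extend_fun_diff: "frag_extend (\<lambda>a. f a - g a) x = frag_extend f x - frag_extend g x"
  by (induction x rule: frag_induct) (auto simp: frag_extend_diff)

lemma frag_extend_split:
  "frag_extend f x = frag_extend (\<lambda>a. if P a then f a else 0) x + frag_extend (\<lambda>a. if P a then 0 else f a) x"
proof (induction x rule: frag_induct)
  case (diff a b)
  then show ?case by (simp add: frag_extend_diff)
qed simp_all

lemma frag_extend_commute:
  "frag_extend (\<lambda>a. frag_extend (h a) y) x = frag_extend (\<lambda>b. frag_extend (\<lambda>a. h a b) x) y"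
  by (induction x rule: frag_induct) (auto simp: frag_extend_diff frag_extend_fun_diff frag_extend_eq_0)

lemma keys_sum_list: "Poly_Mapping.keys (sum_list xs) \<subseteq> (\<Union>x\<in>set xs. Poly_Mapping.keys x)"
  using keys_add by (induction xs) fastforce+

lemma keys_frag_extend_subset:
  "(\<And>a. a \<in> Poly_Mapping.keys x \<Longrightarrow> Poly_Mapping.keys (f a) \<subseteq> S) \<Longrightarrow> Poly_Mapping.keys (frag_extend f x) \<subseteq> S"
  using keys_frag_extend[of f x] by blast

lemma tensor_frag_of [simp]: "tensor (frag_of a) (frag_of b) = frag_of (a, b)"
  by (simp add: tensor_def)

lemma tensor_frag_of_left: "tensor (frag_of a) y = frag_extend (\<lambda>b. frag_of (a, b)) y"
  by (simp add: tensor_def)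

lemma tensor_frag_of_right: "tensor x (frag_of b) = frag_extend (\<lambda>a. frag_of (a, b)) x"
  by (simp add: tensor_def)

lemma frag_extend_tensor:
  "frag_extend h (tensor x y) = frag_extend (\<lambda>a. frag_extend (\<lambda>b. h (a, b)) y) x"
  unfolding tensor_def frag_extend_frag_extend by simp

lemma tensor_frag_extend_left: "tensor (frag_extend f x) y = frag_extend (\<lambda>a. tensor (f a) y) x"
  unfolding tensor_def frag_extend_frag_extend by simp

lemma tensor_frag_extend_right: "tensor x (frag_extend f y) = frag_extend (\<lambda>b. tensor x (f b)) y"
  unfolding tensor_def frag_extend_frag_extend by (rule frag_extend_commute)

lemma tensor_diff_left: "tensor (x - y) z = tensor x z - tensor y z"
  by (simp add: tensor_def frag_extend_diff)

lemma tensor_diff_right: "tensor z (x - y) = tensor z x - tensor z y"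
  unfolding tensor_def by (induction z rule: frag_induct) (auto simp: frag_extend_diff)

lemma tensor_sum_list_left: "tensor (sum_list xs) y = sum_list (map (\<lambda>x. tensor x y) xs)"
  by (simp add: tensor_def frag_extend_sum_list o_def)

lemma tensor_zero_left [simp]: "tensor 0 z = 0"
  by (simp add: tensor_def)

lemma tensor_zero_right [simp]: "tensor z 0 = 0"
  by (simp add: tensor_def frag_extend_eq_0)

lemma tensor_add_right: "tensor z (x + y) = tensor z x + tensor z y"
  unfolding tensor_def by (induction z rule: frag_induct) (auto simp: frag_extend_diff frag_extend_add)

lemma tensor_sum_list_right: "tensor y (sum_list xs) = sum_list (map (tensor y) xs)"
  by (induction xs) (simp_all add: tensor_add_right)

lemma tmap_frag_of [simp]: "tmap f g (frag_of (a, b)) = tensor (f (frag_of a)) (g (frag_of b))"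
  by (simp add: tmap_def)

lemma tmap_frag_extend: "tmap f g (frag_extend h x) = frag_extend (\<lambda>a. tmap f g (h a)) x"
  by (simp add: tmap_def frag_extend_frag_extend)

lemma tassoc_zero [simp]: "tassoc 0 = 0"
  by (simp add: tassoc_def)

lemma tassoc_frag_of [simp]: "tassoc (frag_of ((a, b), c)) = frag_of (a, b, c)"
  by (simp add: tassoc_def)

lemma tmap_zero [simp]: "tmap f g 0 = 0"
  by (simp add: tmap_def)

lemma tassoc_sum_list: "tassoc (sum_list xs) = sum_list (map tassoc xs)"
  by (simp add: tassoc_def[abs_def] frag_extend_sum_list)

lemma tmap_sum_list: "tmap f g (sum_list xs) = sum_list (map (tmap f g) xs)"
  by (simp add: tmap_def[abs_def] frag_extend_sum_list)

lemma midtw_frag_of [simp]: "midtw (frag_of ((a, b), (c, d))) = frag_of ((a, c), (b, d))"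
  by (simp add: midtw_def)

lemma midtw_zero [simp]: "midtw 0 = 0"
  by (simp add: midtw_def)

lemma midtw_frag_extend: "midtw (frag_extend f w) = frag_extend (\<lambda>a. midtw (f a)) w"
  by (simp add: midtw_def frag_extend_frag_extend)

lemma midtw_sum_mset: "midtw (\<Sum>x\<in>#M. f x) = (\<Sum>x\<in>#M. midtw (f x))"
  by (induction M) (simp_all add: midtw_def frag_extend_add)

lemma tmap_sum_mset: "tmap g h (\<Sum>x\<in>#M. f x) = (\<Sum>x\<in>#M. tmap g h (f x))"
  by (induction M) (simp_all add: tmap_def frag_extend_add)

lemma sum_list_map_eq_sum_mset: "sum_list (map f xs) = (\<Sum>x\<in>#mset xs. f x)"
  by (simp add: sum_mset_sum_list[symmetric])

lemma mset_concat_map: "mset (concat (map f xs)) = (\<Sum>x\<in>#mset xs. mset (f x))"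
  by (induction xs) auto

lemma sum_list_map_perm:
  fixes f :: "'a \<Rightarrow> 'b::comm_monoid_add"
  shows "mset xs = mset ys \<Longrightarrow> sum_list (map f xs) = sum_list (map f ys)"
  by (simp add: sum_list_map_eq_sum_mset)

lemma sum_list_concat: "sum_list (concat xss) = sum_list (map sum_list xss)"
  by (induction xss) auto

lemma sum_list_map_eq_zero: "(\<And>x. x \<in> set xs \<Longrightarrow> f x = 0) \<Longrightarrow> sum_list (map f xs) = 0"
  by (induction xs) auto

lemma sum_mset_eq_zero: "(\<And>x. x \<in># M \<Longrightarrow> f x = 0) \<Longrightarrow> (\<Sum>x\<in>#M. f x) = 0"
  by (induction M) auto

lemma image_mset_sum_mset: "image_mset h (\<Sum>x\<in>#M. F x) = (\<Sum>x\<in>#M. image_mset h (F x))"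
  by (induction M) auto

lemma sum_mset_sum_mset: "(\<Sum>t\<in>#(\<Sum>x\<in>#M. N x). f t) = (\<Sum>x\<in>#M. \<Sum>t\<in>#N x. f t)"
  by (induction M) auto

lemma sum_mset_add_mset: "(\<Sum>x\<in>#M. add_mset (h x) (F x)) = image_mset h M + (\<Sum>x\<in>#M. F x)"
  by (induction M) auto

lemma sum_mset_cong: "(\<And>x. x \<in># M \<Longrightarrow> f x = g x) \<Longrightarrow> (\<Sum>x\<in>#M. f x) = (\<Sum>x\<in>#M. g x)"
  by (metis image_mset_cong)

lemma product_append_left: "List.product (xs @ ys) zs = List.product xs zs @ List.product ys zs"
  by (induction xs) auto

lemma product_map_left: "List.product (map f xs) ys = map (apfst f) (List.product xs ys)"
  by (induction xs) auto

section \<open>Canonical representatives\<close>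

lemma set_takeWhile_subset: "set (takeWhile P xs) \<subseteq> set xs"
  by (meson set_takeWhileD subsetI)

lemma notin_set_takeWhile_neq: "a \<notin> set (takeWhile (\<lambda>c. c \<noteq> a) xs)"
  by (induction xs) auto

lemma set_takeWhile_neq_mono:
  "a \<in> set (takeWhile (\<lambda>c. c \<noteq> b) xs) \<Longrightarrow> set (takeWhile (\<lambda>c. c \<noteq> a) xs) \<subseteq> set (takeWhile (\<lambda>c. c \<noteq> b) xs)"
  by (induction xs) auto

lemma takeWhile_neq_cases:
  "a \<in> set xs \<Longrightarrow> b \<in> set xs \<Longrightarrow> a \<noteq> b \<Longrightarrow>
   a \<in> set (takeWhile (\<lambda>c. c \<noteq> b) xs) \<or> b \<in> set (takeWhile (\<lambda>c. c \<noteq> a) xs)"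
  by (induction xs) auto

lemma takeWhile_neq_map:
  "inj_on f (insert a (set xs)) \<Longrightarrow> takeWhile (\<lambda>c. c \<noteq> f a) (map f xs) = map f (takeWhile (\<lambda>c. c \<noteq> a) xs)"
  by (induction xs) (auto simp: inj_on_def)

lemma rn_less_card:
  assumes "a \<in> set \<rho>"
  shows "rn \<rho> a < card (set \<rho>)"
proof -
  have "set (takeWhile (\<lambda>c. c \<noteq> a) \<rho>) \<subset> set \<rho>"
    using assms set_takeWhile_subset notin_set_takeWhile_neq by fast
  then show ?thesis unfolding rn_def by (simp add: psubset_card_mono)
qed

lemma rn_less:
  assumes "a \<in> set (takeWhile (\<lambda>c. c \<noteq> b) \<rho>)"
  shows "rn \<rho> a < rn \<rho> b"
proof -
  have "set (takeWhile (\<lambda>c. c \<noteq> a) \<rho>) \<subset> set (takeWhile (\<lambda>c. c \<noteq> b) \<rho>)"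
    using set_takeWhile_neq_mono[OF assms] notin_set_takeWhile_neq[of a \<rho>] assms by blast
  then show ?thesis unfolding rn_def by (simp add: psubset_card_mono)
qed

lemma inj_on_rn: "inj_on (rn \<rho>) (set \<rho>)"
proof (rule inj_onI, rule ccontr)
  fix a b assume "a \<in> set \<rho>" "b \<in> set \<rho>" "rn \<rho> a = rn \<rho> b" "a \<noteq> b"
  then show False using takeWhile_neq_cases[of a \<rho> b] rn_less[of a b \<rho>] rn_less[of b a \<rho>] by auto
qed

lemma rn_map:
  assumes "inj_on f (insert a (set \<rho>))"
  shows "rn (map f \<rho>) (f a) = rn \<rho> a"
proof -
  have "inj_on f (set (takeWhile (\<lambda>c. c \<noteq> a) \<rho>))"
    using assms set_takeWhile_subset by (metis inj_on_subset subset_insertI2)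
  then show ?thesis unfolding rn_def takeWhile_neq_map[OF assms] by (simp add: card_image)
qed

lemma std_map:
  assumes "inj_on f (set \<rho> \<union> set \<sigma>)"
  shows "std (map f \<rho>, map f \<sigma>) = std (\<rho>, \<sigma>)"
proof -
  have "rn (map f \<rho>) (f a) = rn \<rho> a" if "a \<in> set \<rho> \<union> set \<sigma>" for a
    by (rule rn_map, rule inj_on_subset[OF assms]) (use that in auto)
  then show ?thesis unfolding std_def by auto
qed

lemma valid_std: "valid p \<Longrightarrow> valid (std p)"
  unfolding valid_def std_def by auto

lemma std_std:
  assumes "valid p"
  shows "std (std p) = std p"
proof -
  obtain \<rho> \<sigma> where p: "p = (\<rho>, \<sigma>)" by force
  have "std (std p) = std (map (rn \<rho>) \<rho>, map (rn \<rho>) \<sigma>)" by (simp add: p std_def)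
  also have "\<dots> = std p" using assms inj_on_rn[of \<rho>] by (subst std_map) (auto simp: p valid_def)
  finally show ?thesis .
qed

lemma std_in_Canon: "valid p \<Longrightarrow> std p \<in> Canon"
  by (simp add: Canon_def valid_std std_std)

lemma std_Canon: "p \<in> Canon \<Longrightarrow> std p = p"
  by (simp add: Canon_def)

lemma valid_Canon: "p \<in> Canon \<Longrightarrow> valid p"
  by (simp add: Canon_def)

lemma deg_std: "valid p \<Longrightarrow> deg (std p) = deg p"
  unfolding deg_def std_def using inj_on_rn by (simp add: card_image)

lemma Canon_letter_less_deg:
  assumes "p \<in> Canon" and "a \<in> set (fst p)"
  shows "a < deg p"
proof -
  have "fst p = map (rn (fst p)) (fst p)"
    using std_Canon[OF assms(1)] unfolding std_def by (metis fst_conv)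
  then obtain b where "b \<in> set (fst p)" "a = rn (fst p) b"
    using assms(2) by (metis imageE list.set_map)
  then show ?thesis using rn_less_card unfolding deg_def by auto
qed

lemma empty_subst_Canon: "empty_subst \<in> Canon"
  by (simp add: Canon_def empty_subst_def valid_def std_def)

lemma deg_empty_subst: "deg empty_subst = 0"
  by (simp add: deg_def empty_subst_def)

lemma Canon_deg_0: "{p \<in> Canon. deg p = 0} = {empty_subst}"
proof -
  have "p = empty_subst" if "p \<in> Canon" "deg p = 0" for p
    using that unfolding Canon_def deg_def valid_def empty_subst_def by (cases p) auto
  then show ?thesis using empty_subst_Canon deg_empty_subst by auto
qed

lemma deg_pos: "p \<in> Canon \<Longrightarrow> p \<noteq> empty_subst \<Longrightarrow> 0 < deg p"
  using Canon_deg_0 by (metis (mono_tags, lifting) bot_nat_0.not_eq_extremum mem_Collect_eq singletonD)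

section \<open>Shuffles and cuts of words\<close>

lemma shuffle_Nil_right [simp]: "shuffle xs [] = [xs]"
  by (cases xs) auto

lemma shuffle_map: "shuffle (map f xs) (map f ys) = map (map f) (shuffle xs ys)"
  by (induction xs ys rule: shuffle.induct) auto

lemma set_shuffle: "\<gamma> \<in> set (shuffle xs ys) \<Longrightarrow> set \<gamma> = set xs \<union> set ys"
  by (induction xs ys arbitrary: \<gamma> rule: shuffle.induct) auto

lemma mset_shuffle_Cons_Cons:
  "mset (shuffle (x # xs) (y # ys)) =
     image_mset ((#) x) (mset (shuffle xs (y # ys))) + image_mset ((#) y) (mset (shuffle (x # xs) ys))"
  by simp

text \<open>Both sides satisfy the same recursion: a word of a triple shuffle starts with the first letter
  of one of the three words.\<close>
lemma shuffle_assoc: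
  "(\<Sum>\<gamma>\<in>#mset (shuffle xs ys). mset (shuffle \<gamma> zs)) = (\<Sum>\<gamma>\<in>#mset (shuffle ys zs). mset (shuffle xs \<gamma>))"
proof -
  define L where "L xs ys zs = (\<Sum>\<gamma>\<in>#mset (shuffle xs ys). mset (shuffle \<gamma> zs))" for xs ys zs :: "'a list"
  define R where "R xs ys zs = (\<Sum>\<gamma>\<in>#mset (shuffle ys zs). mset (shuffle xs \<gamma>))" for xs ys zs :: "'a list"
  have L_Cons: "L (x # xs) (y # ys) (z # zs) =
      image_mset ((#) x) (L xs (y # ys) (z # zs)) + image_mset ((#) y) (L (x # xs) ys (z # zs))
      + image_mset ((#) z) (L (x # xs) (y # ys) zs)" for x y z xs ys zs
    unfolding L_def mset_shuffle_Cons_Cons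
    by (simp add: sum_mset.distrib image_mset_sum_mset multiset.map_comp o_def ac_simps)
  have R_Cons: "R (x # xs) (y # ys) (z # zs) =
      image_mset ((#) x) (R xs (y # ys) (z # zs)) + image_mset ((#) y) (R (x # xs) ys (z # zs))
      + image_mset ((#) z) (R (x # xs) (y # ys) zs)" for x y z xs ys zs
    unfolding R_def mset_shuffle_Cons_Cons
    by (simp add: sum_mset.distrib image_mset_sum_mset multiset.map_comp o_def ac_simps)
  have "L xs ys zs = R xs ys zs"
  proof (induction "length xs + length ys + length zs" arbitrary: xs ys zs rule: less_induct)
    case less
    show ?case
    proof (cases "xs = [] \<or> ys = [] \<or> zs = []")
      case True
      then show ?thesis by (auto simp: L_def R_def)
    next
      case False
      then obtain x xs' y ys' z zs' where Cons: "xs = x # xs'" "ys = y # ys'" "zs = z # zs'"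
        by (meson neq_Nil_conv)
      show ?thesis unfolding Cons L_Cons R_Cons by (subst (1 2 3) less) (auto simp: Cons)
    qed
  qed
  then show ?thesis by (simp add: L_def R_def)
qed

definition cuts :: "'a list \<Rightarrow> ('a list \<times> 'a list) list" where
  "cuts s = map (\<lambda>i. (take i s, drop i s)) [0..<Suc (length s)]"

lemma cuts_Nil [simp]: "cuts [] = [([], [])]"
  by (simp add: cuts_def)

lemma cuts_Cons: "cuts (x # s) = ([], x # s) # map (apfst ((#) x)) (cuts s)"
  unfolding cuts_def by (simp add: upt_conv_Cons map_Suc_upt[symmetric] del: upt_Suc)

lemma cuts_append: "ab \<in> set (cuts s) \<Longrightarrow> fst ab @ snd ab = s"
  by (auto simp: cuts_def)

lemma set_cuts_Un: "ab \<in> set (cuts s) \<Longrightarrow> set (fst ab) \<union> set (snd ab) = set s"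
  by (metis cuts_append set_append)

lemma set_cuts_subset:
  assumes "ab \<in> set (cuts s)"
  shows "set (fst ab) \<subseteq> set s" "set (snd ab) \<subseteq> set s"
  using set_cuts_Un[OF assms] by auto

lemma mset_cuts_Cons:
  "mset (cuts (x # s)) = add_mset ([], x # s) (image_mset (apfst ((#) x)) (mset (cuts s)))"
  by (simp add: cuts_Cons)

lemma cuts_cuts_assoc:
  "(\<Sum>ab\<in>#mset (cuts s). image_mset (\<lambda>a12. (fst a12, snd a12, snd ab)) (mset (cuts (fst ab)))) =
   (\<Sum>ab\<in>#mset (cuts s). image_mset (\<lambda>b12. (fst ab, fst b12, snd b12)) (mset (cuts (snd ab))))"
  (is "?L s = ?R s")
proof (induction s)
  case (Cons x s)
  have "?L (x # s) = add_mset ([], [], x # s) (image_mset (\<lambda>ab. ([], x # fst ab, snd ab)) (mset (cuts s))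
      + image_mset (\<lambda>t. (x # fst t, snd t)) (?L s))"
    by (simp add: mset_cuts_Cons image_mset_sum_mset multiset.map_comp o_def sum_mset_add_mset)
  moreover have "?R (x # s) = add_mset ([], [], x # s) (image_mset (\<lambda>ab. ([], x # fst ab, snd ab)) (mset (cuts s))
      + image_mset (\<lambda>t. (x # fst t, snd t)) (?R s))"
    by (simp add: mset_cuts_Cons image_mset_sum_mset multiset.map_comp o_def sum_mset_add_mset
        apfst_def map_prod_def split_def)
  ultimately show ?case using Cons by simp
qed simp

text \<open>A cut of a shuffle of two words induces cuts of both words, and the two halves of the cut
  are shuffles of the corresponding halves.\<close>
lemma cuts_shuffle:
  "(\<Sum>\<gamma>\<in>#mset (shuffle xs ys). mset (cuts \<gamma>)) =
   (\<Sum>ab\<in>#mset (cuts xs). \<Sum>cd\<in>#mset (cuts ys).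
      mset (List.product (shuffle (fst ab) (fst cd)) (shuffle (snd ab) (snd cd))))"
proof -
  define P where "P a c b d = mset (List.product (shuffle a c) (shuffle b d))" for a c b d :: "'a list"
  define L where "L xs ys = (\<Sum>\<gamma>\<in>#mset (shuffle xs ys). mset (cuts \<gamma>))" for xs ys :: "'a list"
  define R where "R xs ys = (\<Sum>ab\<in>#mset (cuts xs). \<Sum>cd\<in>#mset (cuts ys). P (fst ab) (fst cd) (snd ab) (snd cd))"
    for xs ys :: "'a list"
  have P_Cons_Cons: "P (x # a) (y # c) b d = image_mset (apfst ((#) x)) (P a (y # c) b d) + image_mset (apfst ((#) y)) (P (x # a) c b d)"
    and P_Nil_Cons: "P [] (y # c) b d = image_mset (apfst ((#) y)) (P [] c b d)"
    and P_Cons_Nil: "P (x # a) [] b d = image_mset (apfst ((#) x)) (P a [] b d)"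
    and P_Nil_Nil: "P [] [] b d = image_mset (Pair []) (mset (shuffle b d))" for x y a b c d
    by (simp_all add: P_def product_append_left product_map_left multiset.map_comp o_def)
  have L_Cons: "L (x # xs) (y # ys) = image_mset (Pair []) (mset (shuffle (x # xs) (y # ys)))
      + image_mset (apfst ((#) x)) (L xs (y # ys)) + image_mset (apfst ((#) y)) (L (x # xs) ys)" for x y xs ys
    unfolding L_def mset_shuffle_Cons_Cons
    by (simp add: image_mset_sum_mset mset_cuts_Cons sum_mset.distrib sum_mset_add_mset multiset.map_comp o_def ac_simps)
  have R_Cons: "R (x # xs) (y # ys) = image_mset (Pair []) (mset (shuffle (x # xs) (y # ys)))
      + image_mset (apfst ((#) x)) (R xs (y # ys)) + image_mset (apfst ((#) y)) (R (x # xs) ys)" for x y xs ys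
    unfolding R_def mset_cuts_Cons
    by (simp add: image_mset_sum_mset sum_mset.distrib multiset.map_comp o_def
        P_Cons_Cons P_Nil_Cons P_Cons_Nil P_Nil_Nil ac_simps)
  have "L xs ys = R xs ys"
  proof (induction xs ys rule: shuffle.induct)
    case (1 ys)
    then show ?case by (simp add: L_def R_def P_def)
  next
    case (2 x xs)
    then show ?case by (simp add: L_def R_def P_def)
  next
    case (3 x xs y ys)
    then show ?case by (simp add: L_Cons R_Cons)
  qed
  then show ?thesis by (simp add: L_def R_def P_def)
qed

definition restrict_word :: "word \<Rightarrow> word \<Rightarrow> word" where
  "restrict_word \<rho> s = filter (\<lambda>a. a \<in> set s) \<rho>"

abbreviation piece :: "word \<Rightarrow> word \<Rightarrow> subst" where
  "piece \<rho> s \<equiv> std (restrict_word \<rho> s, s)"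

definition cut_term :: "word \<Rightarrow> word \<times> word \<Rightarrow> (subst \<times> subst) \<Rightarrow>\<^sub>0 int" where
  "cut_term \<rho> ab =
     (if set (fst ab) \<inter> set (snd ab) = {} then frag_of (piece \<rho> (fst ab), piece \<rho> (snd ab)) else 0)"

lemma set_restrict_word: "set (restrict_word \<rho> s) = set \<rho> \<inter> set s"
  by (auto simp: restrict_word_def)

lemma restrict_word_restrict_word:
  "set s' \<subseteq> set s \<Longrightarrow> restrict_word (restrict_word \<rho> s) s' = restrict_word \<rho> s'"
  unfolding restrict_word_def by (induction \<rho>) auto

lemma restrict_word_Nil [simp]: "restrict_word \<rho> [] = []"
  by (simp add: restrict_word_def)

lemma restrict_word_all: "set \<rho> \<subseteq> set s \<Longrightarrow> restrict_word \<rho> s = \<rho>"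
  unfolding restrict_word_def by (induction \<rho>) auto

lemma restrict_word_append: "restrict_word (\<rho> @ \<rho>') s = restrict_word \<rho> s @ restrict_word \<rho>' s"
  by (simp add: restrict_word_def)

lemma restrict_word_cong: "set \<rho> \<inter> set s = set \<rho> \<inter> set s' \<Longrightarrow> restrict_word \<rho> s = restrict_word \<rho> s'"
  unfolding restrict_word_def by (rule filter_cong) auto

lemma restrict_word_map:
  "inj_on f (set \<rho> \<union> set s) \<Longrightarrow> restrict_word (map f \<rho>) (map f s) = map f (restrict_word \<rho> s)"
  unfolding restrict_word_def by (induction \<rho>) (auto simp: inj_on_def)

lemma valid_restrict_word: "set s \<subseteq> set \<rho> \<Longrightarrow> valid (restrict_word \<rho> s, s)"
  by (auto simp: valid_def set_restrict_word)

lemma deg_piece: "set s \<subseteq> set \<rho> \<Longrightarrow> deg (piece \<rho> s) = card (set s)"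
  using deg_std[OF valid_restrict_word] by (auto simp: deg_def set_restrict_word Int_absorb1)

lemma std_Nil [simp]: "std ([], []) = empty_subst"
  by (simp add: std_def empty_subst_def)

lemma piece_eq_empty_subst_iff: "piece \<rho> s = empty_subst \<longleftrightarrow> s = [] \<and> restrict_word \<rho> s = []"
  by (auto simp: std_def empty_subst_def)

lemma comult_basis_cuts: "comult_basis (\<rho>, \<sigma>) = sum_list (map (cut_term \<rho>) (cuts \<sigma>))"
  unfolding comult_basis_def cuts_def cut_term_def restrict_word_def
  by (simp add: o_def Let_def cong: if_cong del: upt_Suc)

lemma cut_term_map:
  assumes inj: "inj_on f (set \<rho> \<union> set \<sigma>)" and ab: "ab \<in> set (cuts \<sigma>)"
  shows "cut_term (map f \<rho>) (map_prod (map f) (map f) ab) = cut_term \<rho> ab"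
proof -
  obtain a b where ab_eq: "ab = (a, b)" by force
  have sub: "set a \<subseteq> set \<sigma>" "set b \<subseteq> set \<sigma>"
    using set_cuts_subset[OF ab] by (simp_all add: ab_eq)
  have inj_a: "inj_on f (set \<rho> \<union> set a)" and inj_b: "inj_on f (set \<rho> \<union> set b)"
    using sub by (auto intro: inj_on_subset[OF inj])
  have disj: "f ` set a \<inter> f ` set b = {} \<longleftrightarrow> set a \<inter> set b = {}"
    using sub inj by (auto simp: inj_on_def) blast+
  have "piece (map f \<rho>) (map f a) = piece \<rho> a"
    by (simp add: restrict_word_map[OF inj_a], rule std_map, rule inj_on_subset[OF inj_a])
       (auto simp: restrict_word_def)
  moreover have "piece (map f \<rho>) (map f b) = piece \<rho> b"
    by (simp add: restrict_word_map[OF inj_b], rule std_map, rule inj_on_subset[OF inj_b])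
       (auto simp: restrict_word_def)
  ultimately show ?thesis by (simp add: cut_term_def ab_eq disj)
qed

lemma comult_basis_map:
  assumes "inj_on f (set \<rho> \<union> set \<sigma>)"
  shows "comult_basis (map f \<rho>, map f \<sigma>) = comult_basis (\<rho>, \<sigma>)"
proof -
  have "cuts (map f \<sigma>) = map (map_prod (map f) (map f)) (cuts \<sigma>)"
    by (simp add: cuts_def take_map drop_map del: upt_Suc)
  then show ?thesis
    unfolding comult_basis_cuts using cut_term_map[OF assms] by (simp cong: map_cong)
qed

lemma comult_basis_std: "valid p \<Longrightarrow> comult_basis (std p) = comult_basis p"
  using comult_basis_map[of "rn (fst p)" "fst p" "snd p"] inj_on_rn[of "fst p"]
  by (cases p) (simp add: std_def valid_def)

definition mult_disjoint :: "subst \<Rightarrow> subst \<Rightarrow> subst \<Rightarrow>\<^sub>0 int" where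
  "mult_disjoint p q = sum_list (map (\<lambda>\<gamma>. frag_of (std (fst p @ fst q, \<gamma>))) (shuffle (snd p) (snd q)))"

lemma mult_basis_std: "valid p \<Longrightarrow> valid q \<Longrightarrow> mult_basis (std p) (std q) = mult_basis p q"
  unfolding mult_basis_def by (simp add: std_std)

text \<open>The renaming used by mult_basis to make the letters of two representatives disjoint.\<close>
lemma inj_on_rn_juxtapose:
  assumes "set \<rho> \<inter> set \<rho>' = {}"
  shows "inj_on (\<lambda>a. if a \<in> set \<rho> then rn \<rho> a else card (set \<rho>) + rn \<rho>' a) (set \<rho> \<union> set \<rho>')"
proof (rule inj_onI)
  fix a b
  assume a: "a \<in> set \<rho> \<union> set \<rho>'" and b: "b \<in> set \<rho> \<union> set \<rho>'"
    and eq: "(if a \<in> set \<rho> then rn \<rho> a else card (set \<rho>) + rn \<rho>' a) =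
             (if b \<in> set \<rho> then rn \<rho> b else card (set \<rho>) + rn \<rho>' b)"
  show "a = b"
  proof (cases "a \<in> set \<rho>"; cases "b \<in> set \<rho>")
    assume "a \<in> set \<rho>" "b \<in> set \<rho>"
    then show ?thesis using eq inj_on_rn[of \<rho>] by (auto simp: inj_on_def)
  next
    assume "a \<in> set \<rho>" "b \<notin> set \<rho>"
    then show ?thesis using eq rn_less_card[of a \<rho>] by auto
  next
    assume "a \<notin> set \<rho>" "b \<in> set \<rho>"
    then show ?thesis using eq rn_less_card[of b \<rho>] by auto
  next
    assume "a \<notin> set \<rho>" "b \<notin> set \<rho>"
    then show ?thesis using eq a b inj_on_rn[of \<rho>'] by (auto simp: inj_on_def)
  qed
qed

lemma mult_basis_eq_mult_disjoint:
  assumes "valid p" and "valid q" and disj: "set (fst p) \<inter> set (fst q) = {}"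
  shows "mult_basis p q = mult_disjoint p q"
proof -
  obtain \<rho> \<sigma> \<rho>' \<sigma>' where pq: "p = (\<rho>, \<sigma>)" "q = (\<rho>', \<sigma>')" by force
  have sets: "set \<sigma> = set \<rho>" "set \<sigma>' = set \<rho>'" using assms by (auto simp: pq valid_def)
  define h where "h a = (if a \<in> set \<rho> then rn \<rho> a else card (set \<rho>) + rn \<rho>' a)" for a
  have inj: "inj_on h (set \<rho> \<union> set \<rho>')"
    unfolding h_def using inj_on_rn_juxtapose disj by (simp add: pq)
  have std_p: "std p = (map h \<rho>, map h \<sigma>)"
    using sets by (auto simp: pq std_def h_def)
  have std_q: "std q = (map (rn \<rho>') \<rho>', map (rn \<rho>') \<sigma>')"
    by (simp add: pq std_def)
  have deg_p: "deg (map h \<rho>, map h \<sigma>) = card (set \<rho>)"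
    using deg_std[OF assms(1)] std_p by (simp add: pq deg_def)
  have shifted_q: "map ((+) (card (set \<rho>))) (map (rn \<rho>') \<rho>') = map h \<rho>'"
    "map ((+) (card (set \<rho>))) (map (rn \<rho>') \<sigma>') = map h \<sigma>'"
    using sets disj by (auto simp: h_def pq)
  have "mult_basis p q = sum_list (map (\<lambda>\<gamma>. frag_of (std (map h \<rho> @ map h \<rho>', \<gamma>))) (shuffle (map h \<sigma>) (map h \<sigma>')))"
    unfolding mult_basis_def std_p std_q Let_def by (simp add: shifted_q[unfolded map_map] deg_p)
  also have "\<dots> = sum_list (map (\<lambda>\<gamma>. frag_of (std (map h (\<rho> @ \<rho>'), map h \<gamma>))) (shuffle \<sigma> \<sigma>'))"
    by (simp add: shuffle_map o_def)
  also have "\<dots> = sum_list (map (\<lambda>\<gamma>. frag_of (std (\<rho> @ \<rho>', \<gamma>))) (shuffle \<sigma> \<sigma>'))"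
  proof (intro arg_cong[where f=sum_list] map_cong refl)
    fix \<gamma> assume "\<gamma> \<in> set (shuffle \<sigma> \<sigma>')"
    then have "set \<gamma> = set \<rho> \<union> set \<rho>'" using set_shuffle sets by blast
    then show "frag_of (std (map h (\<rho> @ \<rho>'), map h \<gamma>)) = frag_of (std (\<rho> @ \<rho>', \<gamma>))"
      using inj by (subst std_map) auto
  qed
  finally show ?thesis by (simp add: mult_disjoint_def pq)
qed

lemma disjoint_by_bound:
  fixes k :: nat
  shows "(\<And>a. a \<in> A \<Longrightarrow> a < k) \<Longrightarrow> (\<And>a. a \<in> B \<Longrightarrow> k \<le> a) \<Longrightarrow> A \<inter> B = {}"
  by (meson disjoint_iff not_le)

definition shift :: "nat \<Rightarrow> subst \<Rightarrow> subst" where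
  "shift k p = (map ((+) k) (fst p), map ((+) k) (snd p))"

lemma std_shift: "std (shift k p) = std p"
  unfolding shift_def by (cases p) (simp add: std_map)

lemma valid_shift: "valid p \<Longrightarrow> valid (shift k p)"
  by (simp add: valid_def shift_def)

lemma deg_shift: "deg (shift k p) = deg p"
  by (simp add: deg_def shift_def card_image)

lemma shift_0 [simp]: "shift 0 p = p"
  by (cases p) (simp add: shift_def map_idI)

lemma letter_shift_Canon: "p \<in> Canon \<Longrightarrow> a \<in> set (fst (shift k p)) \<Longrightarrow> k \<le> a \<and> a < k + deg p"
  using Canon_letter_less_deg[of p] by (auto simp: shift_def)

lemma mult_basis_Canon:
  assumes "p \<in> Canon" and "q \<in> Canon"
  shows "mult_basis p q = mult_disjoint p (shift (deg p) q)"
proof -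
  have disj: "set (fst p) \<inter> set (fst (shift (deg p) q)) = {}"
    using Canon_letter_less_deg[OF assms(1)] letter_shift_Canon[OF assms(2)] by fastforce
  have "mult_basis p q = mult_basis (std p) (std (shift (deg p) q))"
    using assms by (simp add: std_Canon std_shift)
  also have "\<dots> = mult_disjoint p (shift (deg p) q)"
    using assms disj
    by (simp add: mult_basis_std mult_basis_eq_mult_disjoint valid_Canon valid_shift)
  finally show ?thesis .
qed

section \<open>The algebra\<close>

lemma mult_frag_of [simp]: "mult (frag_of (p, q)) = mult_basis p q"
  by (simp add: mult_def)

lemma mult_tensor: "mult (tensor x y) = frag_extend (\<lambda>p. frag_extend (mult_basis p) y) x"
  unfolding mult_def frag_extend_tensor by simp

lemma mult_frag_extend: "mult (frag_extend f z) = frag_extend (\<lambda>a. mult (f a)) z"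
  by (simp add: mult_def frag_extend_frag_extend)

lemma mult_tensor_frag_extend_left: "mult (tensor (frag_extend f z) y) = frag_extend (\<lambda>c. mult (tensor (f c) y)) z"
  by (simp add: tensor_frag_extend_left mult_frag_extend)

lemma mult_tensor_frag_extend_right: "mult (tensor y (frag_extend f z)) = frag_extend (\<lambda>c. mult (tensor y (f c))) z"
  by (simp add: tensor_frag_extend_right mult_frag_extend)

lemma zero_in_dWHA: "0 \<in> dWHA"
  by (simp add: dWHA_def)

lemma frag_of_in_dWHA: "p \<in> Canon \<Longrightarrow> frag_of p \<in> dWHA"
  by (simp add: dWHA_def keys_frag_of)

lemma diff_in_dWHA: "x \<in> dWHA \<Longrightarrow> y \<in> dWHA \<Longrightarrow> x - y \<in> dWHA"
  using keys_diff[of x y] by (auto simp: dWHA_def)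

lemma frag_extend_in_dWHA:
  "(\<And>a. a \<in> Poly_Mapping.keys x \<Longrightarrow> f a \<in> dWHA) \<Longrightarrow> frag_extend f x \<in> dWHA"
  unfolding dWHA_def mem_Collect_eq by (rule keys_frag_extend_subset) blast

lemma keys_mult_disjoint:
  "Poly_Mapping.keys (mult_disjoint p q) \<subseteq> {std (fst p @ fst q, \<gamma>) | \<gamma>. \<gamma> \<in> set (shuffle (snd p) (snd q))}"
  unfolding mult_disjoint_def using keys_sum_list by (fastforce simp: keys_frag_of)

lemma keys_mult_basis:
  assumes p: "p \<in> Canon" and q: "q \<in> Canon" and r: "r \<in> Poly_Mapping.keys (mult_basis p q)"
  shows "r \<in> Canon" and "deg r = deg p + deg q"
proof -
  define q' where "q' = shift (deg p) q"
  obtain \<gamma> where r_eq: "r = std (fst p @ fst q', \<gamma>)" and \<gamma>: "\<gamma> \<in> set (shuffle (snd p) (snd q'))"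
    using keys_mult_disjoint[of p q'] r mult_basis_Canon[OF p q, folded q'_def] by auto
  have disj: "set (fst p) \<inter> set (fst q') = {}"
    using Canon_letter_less_deg[OF p] letter_shift_Canon[OF q] by (fastforce simp: q'_def)
  have valid: "valid (fst p @ fst q', \<gamma>)"
    using set_shuffle[OF \<gamma>] valid_Canon[OF p] valid_shift[OF valid_Canon[OF q]]
    by (auto simp: valid_def q'_def)
  show "r \<in> Canon" using std_in_Canon[OF valid] r_eq by simp
  have "deg r = card (set (fst p) \<union> set (fst q'))"
    using deg_std[OF valid] by (simp add: r_eq deg_def)
  also have "\<dots> = deg p + deg q"
    using disj deg_shift[of "deg p" q] by (simp add: card_Un_disjoint deg_def q'_def)
  finally show "deg r = deg p + deg q" .
qed

lemma mult_closed: "x \<in> dWHA \<Longrightarrow> y \<in> dWHA \<Longrightarrow> mult (tensor x y) \<in> dWHA"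
  unfolding dWHA_def mem_Collect_eq mult_tensor
  by (rule keys_frag_extend_subset, rule keys_frag_extend_subset) (use keys_mult_basis(1) in blast)

lemma unit_1: "unit 1 = frag_of empty_subst"
  by (simp add: unit_def)

lemma mult_basis_empty_subst_left: "q \<in> Canon \<Longrightarrow> mult_basis empty_subst q = frag_of q"
  using mult_basis_Canon[OF empty_subst_Canon, of q]
  by (simp add: deg_def mult_disjoint_def empty_subst_def std_Canon)

lemma mult_basis_empty_subst_right: "p \<in> Canon \<Longrightarrow> mult_basis p empty_subst = frag_of p"
  using mult_basis_Canon[OF _ empty_subst_Canon, of p]
  by (simp add: shift_def mult_disjoint_def empty_subst_def std_Canon)

lemma mult_unit_left:
  assumes "x \<in> dWHA"
  shows "mult (tensor (unit 1) x) = x"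
proof -
  have "mult (tensor (unit 1) x) = frag_extend frag_of x"
    unfolding unit_1 mult_tensor frag_extend_of
    by (rule frag_extend_eq) (use assms mult_basis_empty_subst_left in \<open>auto simp: dWHA_def\<close>)
  then show ?thesis by simp
qed

lemma mult_unit_right:
  assumes "x \<in> dWHA"
  shows "mult (tensor x (unit 1)) = x"
proof -
  have "mult (tensor x (unit 1)) = frag_extend frag_of x"
    unfolding unit_1 mult_tensor frag_extend_of
    by (rule frag_extend_eq) (use assms mult_basis_empty_subst_right in \<open>auto simp: dWHA_def\<close>)
  then show ?thesis by simp
qed

lemma frag_extend_mult_disjoint:
  "frag_extend f (mult_disjoint p q) = sum_list (map (\<lambda>\<gamma>. f (std (fst p @ fst q, \<gamma>))) (shuffle (snd p) (snd q)))"
  by (simp add: mult_disjoint_def frag_extend_sum_list o_def)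

lemma mult_disjoint_mult_basis_left:
  assumes "valid p" "valid q" "valid r"
    and "set (fst p) \<inter> set (fst r) = {}" "set (fst q) \<inter> set (fst r) = {}"
  shows "frag_extend (\<lambda>c. mult_basis c (std r)) (mult_disjoint p q) =
    sum_list (map (\<lambda>\<delta>. frag_of (std (fst p @ fst q @ fst r, \<delta>)))
      (concat (map (\<lambda>\<gamma>. shuffle \<gamma> (snd r)) (shuffle (snd p) (snd q)))))"
proof -
  have "mult_basis (std (fst p @ fst q, \<gamma>)) (std r) = mult_disjoint (fst p @ fst q, \<gamma>) r"
    if "\<gamma> \<in> set (shuffle (snd p) (snd q))" for \<gamma>
  proof -
    have "valid (fst p @ fst q, \<gamma>)"
      using set_shuffle[OF that] assms(1,2) by (simp add: valid_def)
    then show ?thesis using assms by (simp add: mult_basis_std mult_basis_eq_mult_disjoint Int_Un_distrib2)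
  qed
  then show ?thesis unfolding frag_extend_mult_disjoint
    by (simp add: mult_disjoint_def map_concat sum_list_concat o_def cong: map_cong)
qed

lemma mult_disjoint_mult_basis_right:
  assumes "valid p" "valid q" "valid r"
    and "set (fst p) \<inter> set (fst q) = {}" "set (fst p) \<inter> set (fst r) = {}"
  shows "frag_extend (mult_basis (std p)) (mult_disjoint q r) =
    sum_list (map (\<lambda>\<delta>. frag_of (std (fst p @ fst q @ fst r, \<delta>)))
      (concat (map (shuffle (snd p)) (shuffle (snd q) (snd r)))))"
proof -
  have "mult_basis (std p) (std (fst q @ fst r, \<gamma>)) = mult_disjoint p (fst q @ fst r, \<gamma>)"
    if "\<gamma> \<in> set (shuffle (snd q) (snd r))" for \<gamma>
  proof -
    have "valid (fst q @ fst r, \<gamma>)"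
      using set_shuffle[OF that] assms(2,3) by (simp add: valid_def)
    then show ?thesis using assms by (simp add: mult_basis_std mult_basis_eq_mult_disjoint Int_Un_distrib)
  qed
  then show ?thesis unfolding frag_extend_mult_disjoint
    by (simp add: mult_disjoint_def map_concat sum_list_concat o_def cong: map_cong)
qed

lemma mult_basis_assoc:
  assumes p: "p \<in> Canon" and q: "q \<in> Canon" and r: "r \<in> Canon"
  shows "frag_extend (\<lambda>c. mult_basis c r) (mult_basis p q) = frag_extend (mult_basis p) (mult_basis q r)"
proof -
  define q' where "q' = shift (deg p) q"
  define r' where "r' = shift (deg p + deg q) r"
  have valid: "valid p" "valid q'" "valid r'"
    using p q r valid_Canon valid_shift by (auto simp: q'_def r'_def)
  have std: "std p = p" "std q' = q" "std r' = r"
    using p q r by (simp_all add: q'_def r'_def std_shift std_Canon)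
  have p_less: "a < deg p" if "a \<in> set (fst p)" for a
    using Canon_letter_less_deg[OF p that] .
  have q'_between: "deg p \<le> a \<and> a < deg p + deg q" if "a \<in> set (fst q')" for a
    using letter_shift_Canon[OF q] that by (simp add: q'_def)
  have r'_greater: "deg p + deg q \<le> a" if "a \<in> set (fst r')" for a
    using letter_shift_Canon[OF r] that by (simp add: r'_def)
  have disj_pq: "set (fst p) \<inter> set (fst q') = {}"
    by (rule disjoint_by_bound[where k="deg p"]) (simp_all add: p_less q'_between)
  have disj_pr: "set (fst p) \<inter> set (fst r') = {}"
    by (rule disjoint_by_bound[where k="deg p"]) (simp add: p_less, metis r'_greater le_add1 le_trans)
  have disj_qr: "set (fst q') \<inter> set (fst r') = {}"
    by (rule disjoint_by_bound[where k="deg p + deg q"]) (simp_all add: q'_between r'_greater)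
  note disj = disj_pq disj_pr disj_qr
  have pq: "mult_basis p q = mult_disjoint p q'" and qr: "mult_basis q r = mult_disjoint q' r'"
    using mult_basis_std[of p q'] mult_basis_std[of q' r'] valid disj
    by (simp_all add: std mult_basis_eq_mult_disjoint)
  let ?F = "\<lambda>\<delta>. frag_of (std (fst p @ fst q' @ fst r', \<delta>))"
  have "frag_extend (\<lambda>c. mult_basis c r) (mult_basis p q) =
      sum_list (map ?F (concat (map (\<lambda>\<gamma>. shuffle \<gamma> (snd r')) (shuffle (snd p) (snd q')))))"
    using mult_disjoint_mult_basis_left[OF valid disj(2,3)] unfolding pq std .
  also have "\<dots> = sum_list (map ?F (concat (map (shuffle (snd p)) (shuffle (snd q') (snd r')))))"
    by (rule sum_list_map_perm)
       (use shuffle_assoc[where xs="snd p" and ys="snd q'" and zs="snd r'"] in \<open>simp add: mset_concat_map\<close>)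
  also have "\<dots> = frag_extend (mult_basis p) (mult_basis q r)"
    using mult_disjoint_mult_basis_right[OF valid disj(1,2)] unfolding qr std ..
  finally show ?thesis .
qed

lemma mult_assoc:
  assumes x: "x \<in> dWHA" and y: "y \<in> dWHA" and z: "z \<in> dWHA"
  shows "mult (tensor (mult (tensor x y)) z) = mult (tensor x (mult (tensor y z)))"
proof -
  have "mult (tensor (mult (tensor x y)) z) =
      frag_extend (\<lambda>a. frag_extend (\<lambda>b. frag_extend (\<lambda>d. frag_extend (\<lambda>c. mult_basis c d) (mult_basis a b)) z) y) x"
    unfolding mult_tensor frag_extend_frag_extend by (simp only: frag_extend_commute[of mult_basis])
  also have "\<dots> = frag_extend (\<lambda>a. frag_extend (\<lambda>b. frag_extend (\<lambda>d. frag_extend (mult_basis a) (mult_basis b d)) z) y) x"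
    by (intro frag_extend_eq) (use x y z mult_basis_assoc in \<open>unfold dWHA_def, blast\<close>)
  also have "\<dots> = mult (tensor x (mult (tensor y z)))"
    unfolding mult_tensor frag_extend_frag_extend ..
  finally show ?thesis .
qed

section \<open>The coalgebra\<close>

lemma comult_frag_of [simp]: "comult (frag_of p) = comult_basis p"
  by (simp add: comult_def)

lemma keys_cut_term:
  assumes "set (fst ab) \<subseteq> set \<rho>" "set (snd ab) \<subseteq> set \<rho>" "cd \<in> Poly_Mapping.keys (cut_term \<rho> ab)"
  shows "fst cd \<in> Canon" "snd cd \<in> Canon" "deg (fst cd) + deg (snd cd) = card (set (fst ab) \<union> set (snd ab))"
proof -
  have disj: "set (fst ab) \<inter> set (snd ab) = {}"
    using assms(3) by (rule contrapos_pp) (simp add: cut_term_def)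
  then have cd: "cd = (piece \<rho> (fst ab), piece \<rho> (snd ab))"
    using assms(3) by (simp add: cut_term_def keys_frag_of)
  show "fst cd \<in> Canon" "snd cd \<in> Canon"
    using std_in_Canon valid_restrict_word assms(1,2) by (simp_all add: cd)
  show "deg (fst cd) + deg (snd cd) = card (set (fst ab) \<union> set (snd ab))"
    using deg_piece assms(1,2) disj by (simp add: cd card_Un_disjoint)
qed

lemma keys_comult_basis:
  assumes "valid p" and "cd \<in> Poly_Mapping.keys (comult_basis p)"
  shows "fst cd \<in> Canon" "snd cd \<in> Canon" "deg (fst cd) + deg (snd cd) = deg p"
proof -
  obtain \<rho> \<sigma> where p: "p = (\<rho>, \<sigma>)" by force
  have "cd \<in> Poly_Mapping.keys (sum_list (map (cut_term \<rho>) (cuts \<sigma>)))"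
    using assms(2) by (simp add: p comult_basis_cuts)
  then obtain ab where ab: "ab \<in> set (cuts \<sigma>)" and cd: "cd \<in> Poly_Mapping.keys (cut_term \<rho> ab)"
    using keys_sum_list by fastforce
  from set_cuts_Un[OF ab] have un: "set (fst ab) \<union> set (snd ab) = set \<rho>"
    using assms(1) by (simp add: p valid_def)
  then have "set (fst ab) \<subseteq> set \<rho>" "set (snd ab) \<subseteq> set \<rho>" by auto
  note keys = keys_cut_term[OF this cd]
  show "fst cd \<in> Canon" "snd cd \<in> Canon" using keys(1,2) .
  show "deg (fst cd) + deg (snd cd) = deg p" using keys(3) un by (simp add: p deg_def)
qed

lemma comult_closed: "x \<in> dWHA \<Longrightarrow> comult x \<in> dWHA2"
  unfolding dWHA_def dWHA2_def mem_Collect_eq comult_def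
proof (rule keys_frag_extend_subset)
  fix p assume "Poly_Mapping.keys x \<subseteq> Canon" "p \<in> Poly_Mapping.keys x"
  then have "valid p" using valid_Canon by blast
  show "Poly_Mapping.keys (comult_basis p) \<subseteq> Canon \<times> Canon"
  proof
    fix cd assume "cd \<in> Poly_Mapping.keys (comult_basis p)"
    then show "cd \<in> Canon \<times> Canon" using keys_comult_basis(1,2)[OF \<open>valid p\<close>] by (cases cd) auto
  qed
qed

lemma counit_frag_of: "counit (frag_of p) = (if p = empty_subst then 1 else 0)"
  by (simp add: counit_def)

lemma lcounit_sum_list: "lcounit (sum_list xs) = sum_list (map lcounit xs)"
  by (simp add: lcounit_def[abs_def] frag_extend_sum_list)

lemma rcounit_sum_list: "rcounit (sum_list xs) = sum_list (map rcounit xs)"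
  by (simp add: rcounit_def[abs_def] frag_extend_sum_list)

lemma lcounit_cut_term: "lcounit (cut_term \<rho> ab) = (if fst ab = [] then frag_of (piece \<rho> (snd ab)) else 0)"
  by (auto simp: cut_term_def lcounit_def counit_frag_of piece_eq_empty_subst_iff)

lemma rcounit_cut_term: "rcounit (cut_term \<rho> ab) = (if snd ab = [] then frag_of (piece \<rho> (fst ab)) else 0)"
  by (auto simp: cut_term_def rcounit_def counit_frag_of piece_eq_empty_subst_iff)

lemma cuts_conv_first: "cuts s = ([], s) # map (\<lambda>i. (take i s, drop i s)) [1..<Suc (length s)]"
  by (simp add: cuts_def upt_conv_Cons del: upt_Suc)

lemma cuts_conv_last: "cuts s = map (\<lambda>i. (take i s, drop i s)) [0..<length s] @ [(s, [])]"
  by (simp add: cuts_def)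

lemma lcounit_comult_basis:
  assumes "valid p"
  shows "lcounit (comult_basis p) = frag_of (std p)"
proof -
  obtain \<rho> \<sigma> where p: "p = (\<rho>, \<sigma>)" by force
  have "lcounit (comult_basis p) = sum_list (map (lcounit \<circ> cut_term \<rho>) (cuts \<sigma>))"
    by (simp add: p comult_basis_cuts lcounit_sum_list)
  also have "\<dots> = frag_of (piece \<rho> \<sigma>)"
  proof -
    have "sum_list (map (lcounit \<circ> cut_term \<rho>) (map (\<lambda>i. (take i \<sigma>, drop i \<sigma>)) [1..<Suc (length \<sigma>)])) = 0"
      by (rule sum_list_map_eq_zero) (auto simp: lcounit_cut_term)
    then show ?thesis by (simp add: cuts_conv_first lcounit_cut_term del: upt_Suc)
  qed
  finally show ?thesis using assms by (simp add: p restrict_word_all valid_def)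
qed

lemma rcounit_comult_basis:
  assumes "valid p"
  shows "rcounit (comult_basis p) = frag_of (std p)"
proof -
  obtain \<rho> \<sigma> where p: "p = (\<rho>, \<sigma>)" by force
  have "rcounit (comult_basis p) = sum_list (map (rcounit \<circ> cut_term \<rho>) (cuts \<sigma>))"
    by (simp add: p comult_basis_cuts rcounit_sum_list)
  also have "\<dots> = frag_of (piece \<rho> \<sigma>)"
  proof -
    have "sum_list (map (rcounit \<circ> cut_term \<rho>) (map (\<lambda>i. (take i \<sigma>, drop i \<sigma>)) [0..<length \<sigma>])) = 0"
      by (rule sum_list_map_eq_zero) (auto simp: rcounit_cut_term)
    then show ?thesis by (simp add: cuts_conv_last rcounit_cut_term)
  qed
  finally show ?thesis using assms by (simp add: p restrict_word_all valid_def)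
qed

lemma lcounit_comult:
  assumes "x \<in> dWHA"
  shows "lcounit (comult x) = x"
proof -
  have "lcounit (comult x) = frag_extend (\<lambda>p. lcounit (comult_basis p)) x"
    unfolding lcounit_def comult_def frag_extend_frag_extend ..
  also have "\<dots> = frag_extend frag_of x"
    by (rule frag_extend_eq) (use assms in \<open>auto simp: dWHA_def lcounit_comult_basis valid_Canon std_Canon\<close>)
  finally show ?thesis by simp
qed

lemma rcounit_comult:
  assumes "x \<in> dWHA"
  shows "rcounit (comult x) = x"
proof -
  have "rcounit (comult x) = frag_extend (\<lambda>p. rcounit (comult_basis p)) x"
    unfolding rcounit_def comult_def frag_extend_frag_extend ..
  also have "\<dots> = frag_extend frag_of x"
    by (rule frag_extend_eq) (use assms in \<open>auto simp: dWHA_def rcounit_comult_basis valid_Canon std_Canon\<close>)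
  finally show ?thesis by simp
qed

definition triple_term :: "word \<Rightarrow> word \<times> word \<times> word \<Rightarrow> (subst \<times> subst \<times> subst) \<Rightarrow>\<^sub>0 int" where
  "triple_term \<rho> t =
     (if set (fst t) \<inter> set (fst (snd t)) = {} \<and> set (fst t) \<inter> set (snd (snd t)) = {}
         \<and> set (fst (snd t)) \<inter> set (snd (snd t)) = {}
      then frag_of (piece \<rho> (fst t), piece \<rho> (fst (snd t)), piece \<rho> (snd (snd t))) else 0)"

lemma frag_extend_rcounit:
  "frag_extend (\<lambda>ab. if snd ab = empty_subst then f (fst ab) else 0) z = frag_extend f (rcounit z)"
  unfolding rcounit_def frag_extend_frag_extend by (rule frag_extend_eq) (auto simp: counit_frag_of)

lemma frag_extend_lcounit:
  "frag_extend (\<lambda>ab. if fst ab = empty_subst then f (snd ab) else 0) z = frag_extend f (lcounit z)"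
  unfolding lcounit_def frag_extend_frag_extend by (rule frag_extend_eq) (auto simp: counit_frag_of)

lemma tassoc_comult_cut_term:
  assumes "set (fst ab) \<subseteq> set \<rho>"
  shows "tassoc (tmap comult id (cut_term \<rho> ab)) =
    (\<Sum>a12\<in>#mset (cuts (fst ab)). triple_term \<rho> (fst a12, snd a12, snd ab))"
proof (cases "set (fst ab) \<inter> set (snd ab) = {}")
  case False
  have "triple_term \<rho> (fst a12, snd a12, snd ab) = 0" if "a12 \<in># mset (cuts (fst ab))" for a12
  proof -
    have "set (fst ab) = set (fst a12) \<union> set (snd a12)"
      using set_cuts_Un[of a12 "fst ab"] that by simp
    then show ?thesis using False unfolding triple_term_def by auto
  qed
  then have "(\<Sum>t\<in>#mset (cuts (fst ab)). triple_term \<rho> (fst t, snd t, snd ab)) = 0"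
    by (rule sum_mset_eq_zero)
  with False show ?thesis by (simp add: cut_term_def)
next
  case True
  have summand: "tassoc (tensor (cut_term (restrict_word \<rho> (fst ab)) a12) (frag_of (piece \<rho> (snd ab)))) =
      triple_term \<rho> (fst a12, snd a12, snd ab)" if "a12 \<in># mset (cuts (fst ab))" for a12
  proof -
    have "set (fst a12) \<subseteq> set (fst ab)" "set (snd a12) \<subseteq> set (fst ab)"
      using set_cuts_subset[of a12 "fst ab"] that by simp_all
    with True show ?thesis unfolding cut_term_def triple_term_def
      by (auto simp: restrict_word_restrict_word)
  qed
  have "tassoc (tmap comult id (cut_term \<rho> ab)) =
      sum_list (map (\<lambda>a12. tassoc (tensor (cut_term (restrict_word \<rho> (fst ab)) a12) (frag_of (piece \<rho> (snd ab)))))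
        (cuts (fst ab)))"
    using True by (simp add: cut_term_def comult_basis_std[OF valid_restrict_word[OF assms]]
        comult_basis_cuts tensor_sum_list_left tassoc_sum_list o_def)
  also have "\<dots> = (\<Sum>a12\<in>#mset (cuts (fst ab)). triple_term \<rho> (fst a12, snd a12, snd ab))"
    unfolding sum_list_map_eq_sum_mset by (rule sum_mset_cong) (rule summand)
  finally show ?thesis .
qed

lemma tmap_comult_cut_term:
  assumes "set (snd ab) \<subseteq> set \<rho>"
  shows "tmap id comult (cut_term \<rho> ab) =
    (\<Sum>b12\<in>#mset (cuts (snd ab)). triple_term \<rho> (fst ab, fst b12, snd b12))"
proof (cases "set (fst ab) \<inter> set (snd ab) = {}")
  case False
  have "triple_term \<rho> (fst ab, fst b12, snd b12) = 0" if "b12 \<in># mset (cuts (snd ab))" for b12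
  proof -
    have "set (snd ab) = set (fst b12) \<union> set (snd b12)"
      using set_cuts_Un[of b12 "snd ab"] that by simp
    then show ?thesis using False unfolding triple_term_def by auto
  qed
  then have "(\<Sum>t\<in>#mset (cuts (snd ab)). triple_term \<rho> (fst ab, fst t, snd t)) = 0"
    by (rule sum_mset_eq_zero)
  with False show ?thesis by (simp add: cut_term_def)
next
  case True
  have summand: "tensor (frag_of (piece \<rho> (fst ab))) (cut_term (restrict_word \<rho> (snd ab)) b12) =
      triple_term \<rho> (fst ab, fst b12, snd b12)" if "b12 \<in># mset (cuts (snd ab))" for b12
  proof -
    have "set (fst b12) \<subseteq> set (snd ab)" "set (snd b12) \<subseteq> set (snd ab)"
      using set_cuts_subset[of b12 "snd ab"] that by simp_all
    with True show ?thesis unfolding cut_term_def triple_term_def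
      by (auto simp: restrict_word_restrict_word)
  qed
  have "tmap id comult (cut_term \<rho> ab) =
      sum_list (map (\<lambda>b12. tensor (frag_of (piece \<rho> (fst ab))) (cut_term (restrict_word \<rho> (snd ab)) b12))
        (cuts (snd ab)))"
    using True by (simp add: cut_term_def comult_basis_std[OF valid_restrict_word[OF assms]]
        comult_basis_cuts tensor_sum_list_right o_def)
  also have "\<dots> = (\<Sum>b12\<in>#mset (cuts (snd ab)). triple_term \<rho> (fst ab, fst b12, snd b12))"
    unfolding sum_list_map_eq_sum_mset by (rule sum_mset_cong) (rule summand)
  finally show ?thesis .
qed

lemma coassoc_comult_basis:
  assumes "valid p"
  shows "tassoc (tmap comult id (comult_basis p)) = tmap id comult (comult_basis p)"
proof -
  obtain \<rho> \<sigma> where p: "p = (\<rho>, \<sigma>)" by force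
  have sub: "set (fst ab) \<subseteq> set \<rho>" "set (snd ab) \<subseteq> set \<rho>" if "ab \<in># mset (cuts \<sigma>)" for ab
    using set_cuts_subset[of ab \<sigma>] that assms by (simp_all add: p valid_def)
  have "tassoc (tmap comult id (comult_basis p)) = (\<Sum>ab\<in>#mset (cuts \<sigma>). tassoc (tmap comult id (cut_term \<rho> ab)))"
    unfolding p comult_basis_cuts tmap_sum_list tassoc_sum_list map_map
    by (simp add: sum_list_map_eq_sum_mset)
  also have "\<dots> = (\<Sum>ab\<in>#mset (cuts \<sigma>). \<Sum>a12\<in>#mset (cuts (fst ab)). triple_term \<rho> (fst a12, snd a12, snd ab))"
    using sub(1) by (intro sum_mset_cong tassoc_comult_cut_term)
  also have "\<dots> = (\<Sum>ab\<in>#mset (cuts \<sigma>). \<Sum>b12\<in>#mset (cuts (snd ab)). triple_term \<rho> (fst ab, fst b12, snd b12))"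
    using arg_cong[OF cuts_cuts_assoc[of \<sigma>], of "\<lambda>M. \<Sum>t\<in>#M. triple_term \<rho> t"]
    unfolding sum_mset_sum_mset by (simp add: multiset.map_comp o_def)
  also have "\<dots> = tmap id comult (comult_basis p)"
    unfolding p comult_basis_cuts tmap_sum_list map_map unfolding sum_list_map_eq_sum_mset o_def
    using tmap_comult_cut_term[symmetric, OF sub(2)] by (rule sum_mset_cong)
  finally show ?thesis .
qed

lemma coassoc:
  assumes "x \<in> dWHA"
  shows "tassoc (tmap comult id (comult x)) = tmap id comult (comult x)"
proof -
  have "tassoc (tmap comult id (comult x)) = frag_extend (\<lambda>p. tassoc (tmap comult id (comult_basis p))) x"
    by (simp add: tassoc_def tmap_def comult_def frag_extend_frag_extend)
  also have "\<dots> = frag_extend (\<lambda>p. tmap id comult (comult_basis p)) x"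
    by (rule frag_extend_eq) (use assms in \<open>auto simp: dWHA_def coassoc_comult_basis valid_Canon\<close>)
  also have "\<dots> = tmap id comult (comult x)"
    by (simp add: tmap_def comult_def frag_extend_frag_extend)
  finally show ?thesis .
qed

lemma frag_extend_tassoc_comult:
  "frag_extend h (tassoc (tmap comult id z)) =
   frag_extend (\<lambda>ab. frag_extend (\<lambda>cd. h (fst cd, snd cd, snd ab)) (comult_basis (fst ab))) z"
  unfolding tassoc_def tmap_def frag_extend_frag_extend
  by (simp add: case_prod_beta tensor_frag_of_right frag_extend_frag_extend)

lemma frag_extend_tmap_comult:
  "frag_extend h (tmap id comult z) =
   frag_extend (\<lambda>ab. frag_extend (\<lambda>cd. h (fst ab, fst cd, snd cd)) (comult_basis (snd ab))) z"
  unfolding tmap_def frag_extend_frag_extend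
  by (simp add: case_prod_beta tensor_frag_of_left frag_extend_frag_extend)

section \<open>Compatibility of product and coproduct\<close>

lemma comult_sum_list: "comult (sum_list xs) = sum_list (map comult xs)"
  by (simp add: comult_def[abs_def] frag_extend_sum_list)

lemma tensor_sum_list_sum_list:
  "tensor (sum_list (map f xs)) (sum_list (map g ys)) = sum_list (map (\<lambda>x. sum_list (map (\<lambda>y. tensor (f x) (g y)) ys)) xs)"
  unfolding tensor_sum_list_left by (simp add: tensor_sum_list_right o_def)

lemma cut_term_shuffle:
  assumes disj: "set \<rho> \<inter> set \<rho>' = {}"
    and sub: "set a \<subseteq> set \<rho>" "set b \<subseteq> set \<rho>" "set c \<subseteq> set \<rho>'" "set d \<subseteq> set \<rho>'"
    and g1: "g1 \<in> set (shuffle a c)" and g2: "g2 \<in> set (shuffle b d)"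
  shows "cut_term (\<rho> @ \<rho>') (g1, g2) =
    (if set a \<inter> set b = {} \<and> set c \<inter> set d = {}
     then frag_of (std (restrict_word \<rho> a @ restrict_word \<rho>' c, g1), std (restrict_word \<rho> b @ restrict_word \<rho>' d, g2))
     else 0)"
proof -
  have s1: "set g1 = set a \<union> set c" and s2: "set g2 = set b \<union> set d"
    using set_shuffle[OF g1] set_shuffle[OF g2] by auto
  have good: "set g1 \<inter> set g2 = {} \<longleftrightarrow> set a \<inter> set b = {} \<and> set c \<inter> set d = {}"
    using s1 s2 sub disj by blast
  have "restrict_word \<rho> g1 = restrict_word \<rho> a" "restrict_word \<rho>' g1 = restrict_word \<rho>' c"
    "restrict_word \<rho> g2 = restrict_word \<rho> b" "restrict_word \<rho>' g2 = restrict_word \<rho>' d"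
    using s1 s2 sub disj by (auto intro!: restrict_word_cong)
  then show ?thesis using good by (simp add: cut_term_def restrict_word_append)
qed

lemma sum_cut_term_shuffles:
  assumes disj: "set \<rho> \<inter> set \<rho>' = {}"
    and sub: "set a \<subseteq> set \<rho>" "set b \<subseteq> set \<rho>" "set c \<subseteq> set \<rho>'" "set d \<subseteq> set \<rho>'"
  shows "(\<Sum>g\<in>#mset (List.product (shuffle a c) (shuffle b d)). cut_term (\<rho> @ \<rho>') g) =
    tmap mult mult (midtw (tensor (cut_term \<rho> (a, b)) (cut_term \<rho>' (c, d))))"
proof (cases "set a \<inter> set b = {} \<and> set c \<inter> set d = {}")
  case False
  have "cut_term (\<rho> @ \<rho>') g = 0" if "g \<in># mset (List.product (shuffle a c) (shuffle b d))" for g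
    using cut_term_shuffle[OF assms, of "fst g" "snd g"] that False by auto
  then have "(\<Sum>g\<in>#mset (List.product (shuffle a c) (shuffle b d)). cut_term (\<rho> @ \<rho>') g) = 0"
    by (rule sum_mset_eq_zero)
  with False show ?thesis by (auto simp: cut_term_def)
next
  case True
  have "mult_basis (piece \<rho> a) (piece \<rho>' c) = mult_disjoint (restrict_word \<rho> a, a) (restrict_word \<rho>' c, c)"
    and "mult_basis (piece \<rho> b) (piece \<rho>' d) = mult_disjoint (restrict_word \<rho> b, b) (restrict_word \<rho>' d, d)"
    using sub disj
    by (auto simp: mult_basis_std valid_restrict_word set_restrict_word intro!: mult_basis_eq_mult_disjoint)
  then have "tmap mult mult (midtw (tensor (cut_term \<rho> (a, b)) (cut_term \<rho>' (c, d)))) =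
      sum_list (map (\<lambda>g1. sum_list (map (\<lambda>g2. frag_of (std (restrict_word \<rho> a @ restrict_word \<rho>' c, g1),
         std (restrict_word \<rho> b @ restrict_word \<rho>' d, g2))) (shuffle b d))) (shuffle a c))"
    using True by (simp add: cut_term_def mult_disjoint_def tensor_sum_list_sum_list)
  also have "\<dots> = sum_list (map (\<lambda>g1. sum_list (map (\<lambda>g2. cut_term (\<rho> @ \<rho>') (g1, g2)) (shuffle b d))) (shuffle a c))"
    using cut_term_shuffle[OF assms] True by (simp cong: map_cong)
  also have "\<dots> = (\<Sum>g\<in>#mset (List.product (shuffle a c) (shuffle b d)). cut_term (\<rho> @ \<rho>') g)"
    by (simp add: product_concat_map sum_list_concat map_concat o_def flip: sum_list_map_eq_sum_mset)
  finally show ?thesis ..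
qed

lemma comult_mult_disjoint:
  assumes "valid (\<rho>, \<sigma>)" and "valid (\<rho>', \<sigma>')" and disj: "set \<rho> \<inter> set \<rho>' = {}"
  shows "comult (mult_disjoint (\<rho>, \<sigma>) (\<rho>', \<sigma>')) =
    tmap mult mult (midtw (tensor (comult_basis (\<rho>, \<sigma>)) (comult_basis (\<rho>', \<sigma>'))))"
proof -
  have sets: "set \<sigma> = set \<rho>" "set \<sigma>' = set \<rho>'" using assms by (auto simp: valid_def)
  have "comult (mult_disjoint (\<rho>, \<sigma>) (\<rho>', \<sigma>')) = sum_list (map (\<lambda>\<gamma>. comult_basis (\<rho> @ \<rho>', \<gamma>)) (shuffle \<sigma> \<sigma>'))"
  proof -
    have "comult_basis (std (\<rho> @ \<rho>', \<gamma>)) = comult_basis (\<rho> @ \<rho>', \<gamma>)" if "\<gamma> \<in> set (shuffle \<sigma> \<sigma>')" for \<gamma>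
      using set_shuffle[OF that] sets by (intro comult_basis_std) (auto simp: valid_def)
    then show ?thesis by (simp add: mult_disjoint_def comult_sum_list o_def cong: map_cong)
  qed
  also have "\<dots> = (\<Sum>g\<in>#(\<Sum>\<gamma>\<in>#mset (shuffle \<sigma> \<sigma>'). mset (cuts \<gamma>)). cut_term (\<rho> @ \<rho>') g)"
    by (simp add: sum_list_map_eq_sum_mset comult_basis_cuts sum_mset_sum_mset)
  also have "\<dots> = (\<Sum>ab\<in>#mset (cuts \<sigma>). \<Sum>cd\<in>#mset (cuts \<sigma>').
      \<Sum>g\<in>#mset (List.product (shuffle (fst ab) (fst cd)) (shuffle (snd ab) (snd cd))). cut_term (\<rho> @ \<rho>') g)"
    unfolding cuts_shuffle sum_mset_sum_mset ..
  also have "\<dots> = (\<Sum>ab\<in>#mset (cuts \<sigma>). \<Sum>cd\<in>#mset (cuts \<sigma>').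
      tmap mult mult (midtw (tensor (cut_term \<rho> ab) (cut_term \<rho>' cd))))"
  proof (intro sum_mset_cong)
    fix ab cd assume "ab \<in># mset (cuts \<sigma>)" "cd \<in># mset (cuts \<sigma>')"
    then have "ab \<in> set (cuts \<sigma>)" "cd \<in> set (cuts \<sigma>')" by simp_all
    then have "set (fst ab) \<subseteq> set \<rho>" "set (snd ab) \<subseteq> set \<rho>" "set (fst cd) \<subseteq> set \<rho>'" "set (snd cd) \<subseteq> set \<rho>'"
      using set_cuts_subset sets by blast+
    from sum_cut_term_shuffles[OF disj this] show "(\<Sum>g\<in>#mset (List.product (shuffle (fst ab) (fst cd)) (shuffle (snd ab) (snd cd))).
        cut_term (\<rho> @ \<rho>') g) = tmap mult mult (midtw (tensor (cut_term \<rho> ab) (cut_term \<rho>' cd)))"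
      by simp
  qed
  also have "\<dots> = tmap mult mult (midtw (tensor (comult_basis (\<rho>, \<sigma>)) (comult_basis (\<rho>', \<sigma>'))))"
    unfolding comult_basis_cuts tensor_sum_list_sum_list unfolding sum_list_map_eq_sum_mset
    by (simp add: midtw_sum_mset tmap_sum_mset)
  finally show ?thesis .
qed

lemma comult_mult_basis:
  assumes p: "p \<in> Canon" and q: "q \<in> Canon"
  shows "comult (mult_basis p q) = tmap mult mult (midtw (tensor (comult_basis p) (comult_basis q)))"
proof -
  define q' where "q' = shift (deg p) q"
  have "valid p" "valid q'" using p q by (simp_all add: q'_def valid_Canon valid_shift)
  moreover have "comult_basis q' = comult_basis q"
    using comult_basis_std[OF \<open>valid q'\<close>] std_shift[of "deg p" q] std_Canon[OF q] by (simp add: q'_def)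
  moreover have "set (fst p) \<inter> set (fst q') = {}"
    using Canon_letter_less_deg[OF p] letter_shift_Canon[OF q, of _ "deg p"] by (fastforce simp: q'_def)
  ultimately show ?thesis
    using comult_mult_disjoint[of "fst p" "snd p" "fst q'" "snd q'"] mult_basis_Canon[OF p q, folded q'_def]
    by simp
qed

lemma comult_mult:
  assumes "w \<in> dWHA2"
  shows "comult (mult w) = tmap mult mult (midtw (tmap comult comult w))"
proof -
  have "comult (mult w) = frag_extend (\<lambda>pq. comult (mult_basis (fst pq) (snd pq))) w"
    by (simp add: comult_def mult_def frag_extend_frag_extend case_prod_beta)
  also have "\<dots> = frag_extend (\<lambda>pq. tmap mult mult (midtw (tensor (comult_basis (fst pq)) (comult_basis (snd pq))))) w"
    by (rule frag_extend_eq) (use assms in \<open>auto simp: dWHA2_def comult_mult_basis subset_iff\<close>)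
  also have "\<dots> = tmap mult mult (midtw (tmap comult comult w))"
    by (subst (2) tmap_def) (simp add: tmap_frag_extend midtw_frag_extend case_prod_beta)
  finally show ?thesis .
qed

lemma counit_zero [simp]: "counit 0 = 0"
  by (simp add: counit_def)

lemma counit_diff: "counit (x - y) = counit x - counit y"
  by (simp add: counit_def lookup_minus)

lemma mult_zero [simp]: "mult 0 = 0"
  by (simp add: mult_def)

lemma mult_diff: "mult (x - y) = mult x - mult y"
  by (simp add: mult_def frag_extend_diff)

lemma counit_mult_basis:
  assumes "p \<in> Canon" and "q \<in> Canon"
  shows "counit (mult_basis p q) = counit (frag_of p) * counit (frag_of q)"
proof (cases "p = empty_subst \<and> q = empty_subst")
  case True
  then show ?thesis by (simp add: mult_basis_empty_subst_left empty_subst_Canon counit_frag_of)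
next
  case False
  have "deg p + deg q \<noteq> 0"
    using deg_pos[of p] deg_pos[of q] assms False by auto
  then have "empty_subst \<notin> Poly_Mapping.keys (mult_basis p q)"
    using keys_mult_basis(2)[OF assms, of empty_subst] deg_empty_subst by auto
  then show ?thesis using False by (auto simp: counit_def counit_frag_of in_keys_iff)
qed

lemma counit_mult:
  assumes x: "x \<in> dWHA" and y: "y \<in> dWHA"
  shows "counit (mult (tensor x y)) = counit x * counit y"
  using x[unfolded dWHA_def mem_Collect_eq]
proof (induction x rule: frag_induction)
  case (one p)
  from y[unfolded dWHA_def mem_Collect_eq] show ?case
  proof (induction y rule: frag_induction)
    case (one q)
    then show ?case using \<open>p \<in> Canon\<close> by (simp add: counit_mult_basis)
  next
    case (diff a b)
    then show ?case by (simp add: tensor_diff_right mult_diff counit_diff right_diff_distrib)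
  qed simp
next
  case (diff a b)
  then show ?case by (simp add: tensor_diff_left mult_diff counit_diff left_diff_distrib)
qed simp

lemma comult_unit: "comult (unit 1) = tensor (unit 1) (unit 1)"
  by (simp add: unit_1 comult_basis_def empty_subst_def std_def)

lemma counit_unit: "counit (unit 1) = 1"
  by (simp add: unit_1 counit_def)

lemma deg_counit: "p \<in> Canon \<Longrightarrow> counit (frag_of p) \<noteq> 0 \<Longrightarrow> deg p = 0"
  by (simp add: counit_frag_of deg_empty_subst split: if_splits)

section \<open>The antipode\<close>

definition conv :: "(subst \<Rightarrow> subst \<Rightarrow>\<^sub>0 int) \<Rightarrow> (subst \<Rightarrow> subst \<Rightarrow>\<^sub>0 int) \<Rightarrow> subst \<Rightarrow> subst \<Rightarrow>\<^sub>0 int" where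
  "conv f g p = frag_extend (\<lambda>ab. mult (tensor (f (fst ab)) (g (snd ab)))) (comult_basis p)"

definition unit_counit :: "subst \<Rightarrow> subst \<Rightarrow>\<^sub>0 int" where
  "unit_counit p = unit (counit (frag_of p))"

lemma deg_fst_less:
  assumes "p \<in> Canon" "ab \<in> Poly_Mapping.keys (comult_basis p)" "snd ab \<noteq> empty_subst"
  shows "deg (fst ab) < deg p"
  using keys_comult_basis[OF valid_Canon[OF assms(1)] assms(2)] deg_pos assms(3) by fastforce

lemma deg_snd_less:
  assumes "p \<in> Canon" "ab \<in> Poly_Mapping.keys (comult_basis p)" "fst ab \<noteq> empty_subst"
  shows "deg (snd ab) < deg p"
  using keys_comult_basis[OF valid_Canon[OF assms(1)] assms(2)] deg_pos assms(3) by fastforce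

text \<open>The antipodes are constructed by the usual recursion on the degree: the summand of the
  convolution with the unit as one tensor factor is solved for. The recursion terminates because
  the bialgebra is connected: all other summands involve pieces of strictly smaller degree.\<close>
function left_antipode :: "subst \<Rightarrow> subst \<Rightarrow>\<^sub>0 int" where
  "left_antipode p =
     (if p \<in> Canon
      then unit_counit p - frag_extend (\<lambda>ab. if snd ab = empty_subst then 0
             else mult (tensor (left_antipode (fst ab)) (frag_of (snd ab)))) (comult_basis p)
      else 0)"
  by auto
termination
  by (relation "measure deg") (auto intro: deg_fst_less)

function right_antipode :: "subst \<Rightarrow> subst \<Rightarrow>\<^sub>0 int" where
  "right_antipode p =
     (if p \<in> Canon
      then unit_counit p - frag_extend (\<lambda>ab. if fst ab = empty_subst then 0
             else mult (tensor (frag_of (fst ab)) (right_antipode (snd ab)))) (comult_basis p)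
      else 0)"
  by auto
termination
  by (relation "measure deg") (auto intro: deg_snd_less)

declare left_antipode.simps [simp del] right_antipode.simps [simp del]

lemma unit_counit_eq: "unit_counit p = (if p = empty_subst then frag_of empty_subst else 0)"
  by (simp add: unit_counit_def unit_def counit_frag_of)

lemma unit_counit_in_dWHA: "unit_counit p \<in> dWHA"
  by (simp add: unit_counit_eq frag_of_in_dWHA zero_in_dWHA empty_subst_Canon)

lemma left_antipode_in_dWHA: "left_antipode p \<in> dWHA"
proof (induction p rule: left_antipode.induct)
  case (1 p)
  have "mult (tensor (left_antipode (fst ab)) (frag_of (snd ab))) \<in> dWHA"
    if "p \<in> Canon" "ab \<in> Poly_Mapping.keys (comult_basis p)" "snd ab \<noteq> empty_subst" for ab
    using 1[OF that] keys_comult_basis(2)[OF valid_Canon that(2)] that(1)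
    by (simp add: mult_closed frag_of_in_dWHA)
  then show ?case
    by (subst left_antipode.simps)
       (auto intro!: diff_in_dWHA unit_counit_in_dWHA frag_extend_in_dWHA simp: zero_in_dWHA)
qed

lemma right_antipode_in_dWHA: "right_antipode p \<in> dWHA"
proof (induction p rule: right_antipode.induct)
  case (1 p)
  have "mult (tensor (frag_of (fst ab)) (right_antipode (snd ab))) \<in> dWHA"
    if "p \<in> Canon" "ab \<in> Poly_Mapping.keys (comult_basis p)" "fst ab \<noteq> empty_subst" for ab
    using 1[OF that] keys_comult_basis(1)[OF valid_Canon that(2)] that(1)
    by (simp add: mult_closed frag_of_in_dWHA)
  then show ?case
    by (subst right_antipode.simps)
       (auto intro!: diff_in_dWHA unit_counit_in_dWHA frag_extend_in_dWHA simp: zero_in_dWHA)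
qed

lemma conv_split_right:
  assumes "p \<in> Canon"
  shows "conv f g p = mult (tensor (f p) (g empty_subst)) +
    frag_extend (\<lambda>ab. if snd ab = empty_subst then 0 else mult (tensor (f (fst ab)) (g (snd ab)))) (comult_basis p)"
proof -
  have "frag_extend (\<lambda>ab. if snd ab = empty_subst then mult (tensor (f (fst ab)) (g (snd ab))) else 0) (comult_basis p)
      = frag_extend (\<lambda>a. mult (tensor (f a) (g empty_subst))) (rcounit (comult_basis p))"
    unfolding frag_extend_rcounit[symmetric] by (rule frag_extend_eq) auto
  then show ?thesis
    using rcounit_comult_basis[OF valid_Canon[OF assms]] std_Canon[OF assms]
    unfolding conv_def by (subst frag_extend_split[where P="\<lambda>ab. snd ab = empty_subst"]) simp
qed

lemma conv_split_left:
  assumes "p \<in> Canon"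
  shows "conv f g p = mult (tensor (f empty_subst) (g p)) +
    frag_extend (\<lambda>ab. if fst ab = empty_subst then 0 else mult (tensor (f (fst ab)) (g (snd ab)))) (comult_basis p)"
proof -
  have "frag_extend (\<lambda>ab. if fst ab = empty_subst then mult (tensor (f (fst ab)) (g (snd ab))) else 0) (comult_basis p)
      = frag_extend (\<lambda>b. mult (tensor (f empty_subst) (g b))) (lcounit (comult_basis p))"
    unfolding frag_extend_lcounit[symmetric] by (rule frag_extend_eq) auto
  then show ?thesis
    using lcounit_comult_basis[OF valid_Canon[OF assms]] std_Canon[OF assms]
    unfolding conv_def by (subst frag_extend_split[where P="\<lambda>ab. fst ab = empty_subst"]) simp
qed

lemma conv_unit_counit_right: "p \<in> Canon \<Longrightarrow> f p \<in> dWHA \<Longrightarrow> conv f unit_counit p = f p"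
  by (simp add: conv_split_right unit_counit_eq mult_unit_right[unfolded unit_1] frag_extend_eq_0)

lemma conv_unit_counit_left: "p \<in> Canon \<Longrightarrow> g p \<in> dWHA \<Longrightarrow> conv unit_counit g p = g p"
  by (simp add: conv_split_left unit_counit_eq mult_unit_left[unfolded unit_1] frag_extend_eq_0)

lemma conv_left_antipode:
  assumes "p \<in> Canon"
  shows "conv left_antipode frag_of p = unit_counit p"
proof -
  have "conv left_antipode frag_of p = left_antipode p + frag_extend (\<lambda>ab. if snd ab = empty_subst then 0
      else mult (tensor (left_antipode (fst ab)) (frag_of (snd ab)))) (comult_basis p)"
    using assms by (simp add: conv_split_right mult_unit_right[unfolded unit_1] left_antipode_in_dWHA)
  also have "\<dots> = unit_counit p"
    using assms by (subst (1) left_antipode.simps) simp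
  finally show ?thesis .
qed

lemma conv_right_antipode:
  assumes "p \<in> Canon"
  shows "conv frag_of right_antipode p = unit_counit p"
proof -
  have "conv frag_of right_antipode p = right_antipode p + frag_extend (\<lambda>ab. if fst ab = empty_subst then 0
      else mult (tensor (frag_of (fst ab)) (right_antipode (snd ab)))) (comult_basis p)"
    using assms by (simp add: conv_split_left mult_unit_left[unfolded unit_1] right_antipode_in_dWHA)
  also have "\<dots> = unit_counit p"
    using assms by (subst (1) right_antipode.simps) simp
  finally show ?thesis .
qed

lemma conv_cong:
  assumes "p \<in> Canon" and "\<And>q. q \<in> Canon \<Longrightarrow> f q = f' q" and "\<And>q. q \<in> Canon \<Longrightarrow> g q = g' q"
  shows "conv f g p = conv f' g' p"
  unfolding conv_def
  by (rule frag_extend_eq) (use keys_comult_basis[OF valid_Canon[OF assms(1)]] assms(2,3) in auto)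

lemma conv_assoc:
  assumes p: "p \<in> Canon"
    and f: "\<And>q. q \<in> Canon \<Longrightarrow> f q \<in> dWHA" and g: "\<And>q. q \<in> Canon \<Longrightarrow> g q \<in> dWHA"
    and h: "\<And>q. q \<in> Canon \<Longrightarrow> h q \<in> dWHA"
  shows "conv (conv f g) h p = conv f (conv g h) p"
proof -
  define F where "F t = mult (tensor (f (fst t)) (mult (tensor (g (fst (snd t))) (h (snd (snd t))))))" for t
  have keys: "fst ab \<in> Canon" "snd ab \<in> Canon" if "q \<in> Canon" "ab \<in> Poly_Mapping.keys (comult_basis q)" for q ab
    using keys_comult_basis[OF valid_Canon[OF that(1)] that(2)] by simp_all
  have "conv (conv f g) h p =
      frag_extend (\<lambda>ab. frag_extend (\<lambda>cd. F (fst cd, snd cd, snd ab)) (comult_basis (fst ab))) (comult_basis p)"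
    unfolding conv_def mult_tensor_frag_extend_left
  proof (intro frag_extend_eq)
    fix ab cd assume ab: "ab \<in> Poly_Mapping.keys (comult_basis p)"
      and cd: "cd \<in> Poly_Mapping.keys (comult_basis (fst ab))"
    have "fst ab \<in> Canon" "snd ab \<in> Canon" using keys[OF p ab] .
    moreover have "fst cd \<in> Canon" "snd cd \<in> Canon" using keys[OF \<open>fst ab \<in> Canon\<close> cd] .
    ultimately show "mult (tensor (mult (tensor (f (fst cd)) (g (snd cd)))) (h (snd ab))) = F (fst cd, snd cd, snd ab)"
      unfolding F_def by (simp add: mult_assoc f g h)
  qed
  also have "\<dots> = frag_extend F (tassoc (tmap comult id (comult_basis p)))"
    by (simp add: frag_extend_tassoc_comult)
  also have "\<dots> = frag_extend F (tmap id comult (comult_basis p))"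
    by (simp add: coassoc_comult_basis valid_Canon[OF p])
  also have "\<dots> = frag_extend (\<lambda>ab. frag_extend (\<lambda>cd. F (fst ab, fst cd, snd cd)) (comult_basis (snd ab))) (comult_basis p)"
    by (simp add: frag_extend_tmap_comult)
  also have "\<dots> = conv f (conv g h) p"
    unfolding conv_def mult_tensor_frag_extend_right
    by (intro frag_extend_eq) (simp add: F_def)
  finally show ?thesis .
qed

lemma left_antipode_eq_right_antipode:
  assumes p: "p \<in> Canon"
  shows "left_antipode p = right_antipode p"
proof -
  have "left_antipode p = conv left_antipode unit_counit p"
    using conv_unit_counit_right[OF p left_antipode_in_dWHA] by simp
  also have "\<dots> = conv left_antipode (conv frag_of right_antipode) p"
    by (rule conv_cong[OF p]) (simp_all add: conv_right_antipode)
  also have "\<dots> = conv (conv left_antipode frag_of) right_antipode p"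
    by (rule conv_assoc[symmetric, OF p]) (simp_all add: left_antipode_in_dWHA right_antipode_in_dWHA frag_of_in_dWHA)
  also have "\<dots> = conv unit_counit right_antipode p"
    by (rule conv_cong[OF p]) (simp_all add: conv_left_antipode)
  also have "\<dots> = right_antipode p"
    using conv_unit_counit_left[OF p right_antipode_in_dWHA] .
  finally show ?thesis .
qed

lemma unit_counit_frag_extend: "unit (counit x) = frag_extend unit_counit x"
proof (induction x rule: frag_induct)
  case (diff a b)
  then show ?case by (simp add: frag_extend_diff unit_def counit_diff frag_cmul_diff_distrib)
qed (simp_all add: unit_def unit_counit_def)

lemma antipode_exists:
  "\<exists>s. (\<forall>p. Poly_Mapping.keys (s p) \<subseteq> Canon) \<and>
       (\<forall>x\<in>dWHA. mult (tmap (frag_extend s) id (comult x)) = unit (counit x) \<and>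
                  mult (tmap id (frag_extend s) (comult x)) = unit (counit x))"
proof (intro exI conjI allI ballI)
  show "Poly_Mapping.keys (left_antipode p) \<subseteq> Canon" for p
    using left_antipode_in_dWHA by (simp add: dWHA_def)
next
  fix x assume x: "x \<in> dWHA"
  have "mult (tmap (frag_extend left_antipode) id (comult x)) = frag_extend (\<lambda>p. conv left_antipode frag_of p) x"
    by (simp add: comult_def tmap_def mult_frag_extend frag_extend_frag_extend conv_def case_prod_beta)
  also have "\<dots> = unit (counit x)"
    unfolding unit_counit_frag_extend
    by (rule frag_extend_eq) (use x conv_left_antipode in \<open>auto simp: dWHA_def\<close>)
  finally show "mult (tmap (frag_extend left_antipode) id (comult x)) = unit (counit x)" .
  have "mult (tmap id (frag_extend left_antipode) (comult x)) = frag_extend (\<lambda>p. conv frag_of left_antipode p) x"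
    by (simp add: comult_def tmap_def mult_frag_extend frag_extend_frag_extend conv_def case_prod_beta)
  also have "\<dots> = frag_extend (\<lambda>p. conv frag_of right_antipode p) x"
    by (rule frag_extend_eq, rule conv_cong)
       (use x left_antipode_eq_right_antipode in \<open>auto simp: dWHA_def\<close>)
  also have "\<dots> = unit (counit x)"
    unfolding unit_counit_frag_extend
    by (rule frag_extend_eq) (use x conv_right_antipode in \<open>auto simp: dWHA_def\<close>)
  finally show "mult (tmap id (frag_extend left_antipode) (comult x)) = unit (counit x)" .
qed

theorem theorem7p8:
  shows "(empty_subst \<in> Canon)
   \<and> (\<forall>x\<in>dWHA. \<forall>y\<in>dWHA. mult (tensor x y) \<in> dWHA)
   \<and> (\<forall>x\<in>dWHA. comult x \<in> dWHA2)
   \<and> (\<forall>x\<in>dWHA. \<forall>y\<in>dWHA. \<forall>z\<in>dWHA.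
       mult (tensor (mult (tensor x y)) z) = mult (tensor x (mult (tensor y z))))
   \<and> (\<forall>x\<in>dWHA. mult (tensor (unit 1) x) = x \<and> mult (tensor x (unit 1)) = x)
   \<and> (\<forall>x\<in>dWHA. tassoc (tmap comult id (comult x)) = tmap id comult (comult x))
   \<and> (\<forall>x\<in>dWHA. lcounit (comult x) = x \<and> rcounit (comult x) = x)
   \<and> (\<forall>w\<in>dWHA2. comult (mult w) = tmap mult mult (midtw (tmap comult comult w)))
   \<and> (\<forall>x\<in>dWHA. \<forall>y\<in>dWHA. counit (mult (tensor x y)) = counit x * counit y)
   \<and> (comult (unit 1) = tensor (unit 1) (unit 1))
   \<and> (counit (unit 1) = 1)
   \<and> (\<forall>p\<in>Canon. \<forall>q\<in>Canon. \<forall>r\<in>Poly_Mapping.keys (mult_basis p q). deg r = deg p + deg q)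
   \<and> (\<forall>p\<in>Canon. \<forall>(a, b)\<in>Poly_Mapping.keys (comult_basis p). deg a + deg b = deg p)
   \<and> (deg empty_subst = 0)
   \<and> (\<forall>p\<in>Canon. counit (frag_of p) \<noteq> 0 \<longrightarrow> deg p = 0)
   \<and> ({p \<in> Canon. deg p = 0} = {empty_subst})
   \<and> (\<exists>s. (\<forall>p. Poly_Mapping.keys (s p) \<subseteq> Canon) \<and>
       (\<forall>x\<in>dWHA. mult (tmap (frag_extend s) id (comult x)) = unit (counit x) \<and>
                  mult (tmap id (frag_extend s) (comult x)) = unit (counit x)))"
proof (intro conjI ballI impI)
  fix p cd assume "p \<in> Canon" "cd \<in> Poly_Mapping.keys (comult_basis p)"
  then show "case cd of (a, b) \<Rightarrow> deg a + deg b = deg p"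
    using keys_comult_basis(3) valid_Canon by (simp add: case_prod_beta)
qed (fact antipode_exists | simp add: empty_subst_Canon mult_closed comult_closed mult_assoc
    mult_unit_left mult_unit_right coassoc lcounit_comult rcounit_comult comult_mult counit_mult
    comult_unit counit_unit keys_mult_basis(2) deg_empty_subst deg_counit Canon_deg_0)+

end
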